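(* Consider the spectrum-oligopoly game described in the context on a mean valid conflict graph $G$ characterized by $I_1,\dots,I_d$ with $M_s=|I_s|$, $M_1\ge\dots\ge M_d$. Let $(t_{s,j})$ be the unique family such that for each $j\in\{1,\dots,n\}$: $t_{s,j}\ge0$, $\sum_s t_{s,j}=1$, and for some $d_j\in\{1,\dots,d\}$, $t_{s,j}>0$ for $s\le d_j$, $t_{s,j}=0$ for $s>d_j$, and $M_1W(\gamma_{1,j})=\dots=M_{d_j}W(\gamma_{d_j,j})\ge M_{d_j+1}W(\gamma_{d_j+1,j})\ge\dots\ge M_dW(\gamma_{d,j})$, where $\gamma_{s,j}=\sum_{k=j}^nt_{s,k}q_k$. Consider the symmetric strategy profile in which every primary, in state $j\in\{1,\dots,n\}$, selects $I_s$ with probability $t_{s,j}$ and, at every node of $I_s$, draws its penalty from the distribution $\phi_j$ defined in the context with $\alpha_k=q_kt_{s,k}$ ($k=1,\dots,n$). This strategy profile is a Nash equilibrium.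
   Context: Model. There are $l$ primaries and at each node of a finite conflict graph $G=(V,E)$ there are $m$ secondaries, with integers $1\le m<l$. Each primary owns one channel whose state $j\in\{0,1,\dots,n\}$ is the same at every node; the states of the primaries are independent, each equal to $j$ with probability $q_j$, with $\sum_{j=1}^n q_j<1$; state $0$ means the channel cannot be sold. Constants $c$ (cost per sale) and $v$ (maximal accepted penalty). For $j=1,\dots,n$, $g_j$ is continuous strictly increasing with $g_i(p)<g_j(p)$ whenever $i>j$; $f_j=g_j^{-1}$; for all $i<j$ and $x>y>g_i(c)$: $\frac{f_i(y)-c}{f_j(y)-c}<\frac{f_i(x)-c}{f_j(x)-c}$; and $f_1(v)>c$. Each primary knows only its own state; in state $j\ge1$ it chooses (possibly randomly) an independent set of $G$ and a penalty at each node of it; in state $0$ it offers nothing. At each node, of the $Y$ channels offered with penalty $\le v$, the $\min(Y,m)$ lowest-penalty ones are sold (ties broken uniformly at random). A primary in state $j$ selling at penalty $x$ at a node earns $f_j(x)-c$ there, else $0$; payoff is summed over nodes. A Nash equilibrium: no primary in any state $j$ can increase its expected payoff by unilateral deviation (deviations may use any independent set of $G$ and any penalties). Notation: $w(x)=\sum_{i=m}^{l-1}\binom{l-1}{i}x^i(1-x)^{l-1-i}$, $W=1-w$. Mean valid graph: $V$ is the disjoint union of $d\ge2$ maximal independent sets $I_1,\dots,I_d$ with $M_1\ge\dots\ge M_d$, $M_s=|I_s|$, and every independent set $I$ satisfies $\sum_s|I\cap I_s|/M_s\le1$. Penalty distribution: given $\alpha_1,\dots,\alpha_n\ge0$ with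 $\sum\alpha_k<1$, let $\Gamma_j=\sum_{k=j}^n\alpha_k$ ($\Gamma_{n+1}=0$), $U_1=v$, and recursively for $j=1,\dots,n$: $p_j=c+(f_j(U_j)-c)W(\Gamma_j)$, $L_j=g_j\!\left(\frac{p_j-c}{W(\Gamma_{j+1})}+c\right)$, $U_{j+1}=L_j$. For $j$ with $\alpha_j>0$, $\phi_j$ is the CDF with $\phi_j(x)=0$ for $x<L_j$, $\phi_j(x)=\frac1{\alpha_j}\left(w^{-1}\!\left(\frac{f_j(x)-p_j}{f_j(x)-c}\right)-\Gamma_{j+1}\right)$ for $L_j\le x\le U_j$, $\phi_j(x)=1$ for $x>U_j$. *)

theory Defs
  imports "HOL-Probability.Probability"
begin

text \<open>The conflict graph has vertex type 'v (finite, V = UNIV) and edge relation E.\<close>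

definition indep_set :: "('v \<Rightarrow> 'v \<Rightarrow> bool) \<Rightarrow> 'v set \<Rightarrow> bool" where
  "indep_set E S \<longleftrightarrow> (\<forall>u\<in>S. \<forall>w\<in>S. \<not> E u w)"

definition maximal_indep_set :: "('v \<Rightarrow> 'v \<Rightarrow> bool) \<Rightarrow> 'v set \<Rightarrow> bool" where
  "maximal_indep_set E S \<longleftrightarrow> indep_set E S \<and> (\<forall>u. u \<notin> S \<longrightarrow> \<not> indep_set E (insert u S))"

definition mean_valid :: "('v \<Rightarrow> 'v \<Rightarrow> bool) \<Rightarrow> nat \<Rightarrow> (nat \<Rightarrow> 'v set) \<Rightarrow> bool" where
  "mean_valid E d I \<longleftrightarrow>
     2 \<le> d \<and>
     (\<forall>s\<in>{1..d}. maximal_indep_set E (I s)) \<and>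
     (\<forall>s\<in>{1..d}. \<forall>s'\<in>{1..d}. s \<noteq> s' \<longrightarrow> I s \<inter> I s' = {}) \<and>
     (\<Union>s\<in>{1..d}. I s) = UNIV \<and>
     (\<forall>s\<in>{1..d}. \<forall>s'\<in>{1..d}. s \<le> s' \<longrightarrow> card (I s') \<le> card (I s)) \<and>
     (\<forall>S. indep_set E S \<longrightarrow> (\<Sum>s=1..d. real (card (S \<inter> I s)) / real (card (I s))) \<le> 1)"

definition wfun :: "nat \<Rightarrow> nat \<Rightarrow> real \<Rightarrow> real" where
  "wfun l m x = (\<Sum>i=m..l-1. real ((l-1) choose i) * x ^ i * (1 - x) ^ (l - 1 - i))"

definition Wfun :: "nat \<Rightarrow> nat \<Rightarrow> real \<Rightarrow> real" where
  "Wfun l m x = 1 - wfun l m x"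

definition winv :: "nat \<Rightarrow> nat \<Rightarrow> real \<Rightarrow> real" where
  "winv l m y = (THE x. 0 \<le> x \<and> x \<le> 1 \<and> wfun l m x = y)"

definition Gam :: "nat \<Rightarrow> (nat \<Rightarrow> real) \<Rightarrow> nat \<Rightarrow> real" where
  "Gam n alpha j = (\<Sum>k=j..n. alpha k)"

text \<open>price_j as a function of the upper end u = U_j.\<close>
definition pr_of :: "nat \<Rightarrow> nat \<Rightarrow> real \<Rightarrow> (nat \<Rightarrow> real \<Rightarrow> real) \<Rightarrow> nat \<Rightarrow> (nat \<Rightarrow> real)
    \<Rightarrow> nat \<Rightarrow> real \<Rightarrow> real" where
  "pr_of l m c f n alpha j u = c + (f j u - c) * Wfun l m (Gam n alpha j)"

text \<open>L_j as a function of the upper end u = U_j.\<close>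
definition low_of :: "nat \<Rightarrow> nat \<Rightarrow> real \<Rightarrow> (nat \<Rightarrow> real \<Rightarrow> real) \<Rightarrow> (nat \<Rightarrow> real \<Rightarrow> real)
    \<Rightarrow> nat \<Rightarrow> (nat \<Rightarrow> real) \<Rightarrow> nat \<Rightarrow> real \<Rightarrow> real" where
  "low_of l m c f g n alpha j u =
     g j ((pr_of l m c f n alpha j u - c) / Wfun l m (Gam n alpha (Suc j)) + c)"

text \<open>Upper ends: U_1 = v, U_(j+1) = L_j (index 0 is unused).\<close>
fun Upen :: "nat \<Rightarrow> nat \<Rightarrow> real \<Rightarrow> real \<Rightarrow> (nat \<Rightarrow> real \<Rightarrow> real) \<Rightarrow> (nat \<Rightarrow> real \<Rightarrow> real)
    \<Rightarrow> nat \<Rightarrow> (nat \<Rightarrow> real) \<Rightarrow> nat \<Rightarrow> real" where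
  "Upen l m c v f g n alpha 0 = v"
| "Upen l m c v f g n alpha (Suc 0) = v"
| "Upen l m c v f g n alpha (Suc (Suc j)) =
     low_of l m c f g n alpha (Suc j) (Upen l m c v f g n alpha (Suc j))"

definition Lpen :: "nat \<Rightarrow> nat \<Rightarrow> real \<Rightarrow> real \<Rightarrow> (nat \<Rightarrow> real \<Rightarrow> real) \<Rightarrow> (nat \<Rightarrow> real \<Rightarrow> real)
    \<Rightarrow> nat \<Rightarrow> (nat \<Rightarrow> real) \<Rightarrow> nat \<Rightarrow> real" where
  "Lpen l m c v f g n alpha j = low_of l m c f g n alpha j (Upen l m c v f g n alpha j)"

definition ppr :: "nat \<Rightarrow> nat \<Rightarrow> real \<Rightarrow> real \<Rightarrow> (nat \<Rightarrow> real \<Rightarrow> real) \<Rightarrow> (nat \<Rightarrow> real \<Rightarrow> real)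
    \<Rightarrow> nat \<Rightarrow> (nat \<Rightarrow> real) \<Rightarrow> nat \<Rightarrow> real" where
  "ppr l m c v f g n alpha j = pr_of l m c f n alpha j (Upen l m c v f g n alpha j)"

text \<open>The CDF phi_j (meaningful when alpha_j > 0).\<close>
definition phi :: "nat \<Rightarrow> nat \<Rightarrow> real \<Rightarrow> real \<Rightarrow> (nat \<Rightarrow> real \<Rightarrow> real) \<Rightarrow> (nat \<Rightarrow> real \<Rightarrow> real)
    \<Rightarrow> nat \<Rightarrow> (nat \<Rightarrow> real) \<Rightarrow> nat \<Rightarrow> real \<Rightarrow> real" where
  "phi l m c v f g n alpha j x =
     (if x < Lpen l m c v f g n alpha j then 0
      else if x \<le> Upen l m c v f g n alpha j then
        (winv l m ((f j x - ppr l m c v f g n alpha j) / (f j x - c)) - Gam n alpha (Suc j)) / alpha j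
      else 1)"

text \<open>An action of a primary: an (independent) set of nodes and a penalty at every node
  (only the penalties on the chosen set matter).\<close>
type_synonym 'v action = "'v set \<times> ('v \<Rightarrow> real)"

definition actM :: "('v::finite) action measure" where
  "actM = count_space UNIV \<Otimes>\<^sub>M (\<Pi>\<^sub>M u\<in>UNIV. (borel :: real measure))"

definition no_offer :: "'v action" where
  "no_offer = ({}, (\<lambda>_. 0))"

text \<open>Probability that a channel offered at node u with penalty xu is sold, given the actions
  ys k of the other primaries k in O (ties broken uniformly at random).\<close>
definition win_prob :: "nat \<Rightarrow> real \<Rightarrow> nat set \<Rightarrow> (nat \<Rightarrow> 'v action) \<Rightarrow> 'v \<Rightarrow> real \<Rightarrow> real" where
  "win_prob m v Opp ys u xu =
     (let A = card {k\<in>Opp. u \<in> fst (ys k) \<and> snd (ys k) u \<le> v \<and> snd (ys k) u < xu};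
          T = card {k\<in>Opp. u \<in> fst (ys k) \<and> snd (ys k) u \<le> v \<and> snd (ys k) u = xu}
      in if xu \<le> v \<and> A < m then min 1 ((real m - real A) / (real T + 1)) else 0)"

definition real_payoff :: "nat \<Rightarrow> nat \<Rightarrow> real \<Rightarrow> real \<Rightarrow> (real \<Rightarrow> real) \<Rightarrow> nat
    \<Rightarrow> ('v::finite) action \<Rightarrow> (nat \<Rightarrow> 'v action) \<Rightarrow> real" where
  "real_payoff l m c v fj i a ys =
     (\<Sum>u\<in>fst a. (fj (snd a u) - c) * win_prob m v ({..<l} - {i}) ys u (snd a u))"

text \<open>A strategy maps each state j \<ge> 1 to a probability measure on actions. The law of the
  action of a primary with strategy strategy of k, including the random state (Q is the law of the
  state; in state 0 nothing is offered).\<close>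
definition act_law :: "nat pmf \<Rightarrow> (nat \<Rightarrow> ('v::finite) action measure) \<Rightarrow> 'v action measure" where
  "act_law Q sk = measure_pmf Q \<bind> (\<lambda>s. if s = 0 then return actM no_offer else sk s)"

definition exp_payoff :: "nat \<Rightarrow> nat \<Rightarrow> real \<Rightarrow> real \<Rightarrow> (nat \<Rightarrow> real \<Rightarrow> real) \<Rightarrow> nat pmf
    \<Rightarrow> (nat \<Rightarrow> nat \<Rightarrow> ('v::finite) action measure) \<Rightarrow> nat \<Rightarrow> nat \<Rightarrow> 'v action \<Rightarrow> real" where
  "exp_payoff l m c v f Q prof i j a =
     (\<integral>ys. real_payoff l m c v (f j) i a ys
        \<partial>(\<Pi>\<^sub>M k\<in>{..<l} - {i}. act_law Q (prof k)))"

definition strat_payoff :: "nat \<Rightarrow> nat \<Rightarrow> real \<Rightarrow> real \<Rightarrow> (nat \<Rightarrow> real \<Rightarrow> real) \<Rightarrow> nat pmf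
    \<Rightarrow> (nat \<Rightarrow> nat \<Rightarrow> ('v::finite) action measure) \<Rightarrow> nat \<Rightarrow> nat \<Rightarrow> real" where
  "strat_payoff l m c v f Q prof i j =
     (\<integral>a. exp_payoff l m c v f Q prof i j a \<partial>(prof i j))"

definition nash_eq :: "('v \<Rightarrow> 'v \<Rightarrow> bool) \<Rightarrow> nat \<Rightarrow> nat \<Rightarrow> nat \<Rightarrow> real \<Rightarrow> real
    \<Rightarrow> (nat \<Rightarrow> real \<Rightarrow> real) \<Rightarrow> nat pmf \<Rightarrow> (nat \<Rightarrow> nat \<Rightarrow> ('v::finite) action measure) \<Rightarrow> bool" where
  "nash_eq E l m n c v f Q prof \<longleftrightarrow>
     (\<forall>i<l. \<forall>j\<in>{1..n}.
        prob_space (prof i j) \<and> sets (prof i j) = sets actM \<and>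
        (AE a in prof i j. indep_set E (fst a)) \<and>
        (\<forall>a. indep_set E (fst a) \<longrightarrow>
              exp_payoff l m c v f Q prof i j a \<le> strat_payoff l m c v f Q prof i j))"

definition pen_law :: "nat \<Rightarrow> nat \<Rightarrow> real \<Rightarrow> real \<Rightarrow> (nat \<Rightarrow> real \<Rightarrow> real) \<Rightarrow> (nat \<Rightarrow> real \<Rightarrow> real)
    \<Rightarrow> nat \<Rightarrow> nat pmf \<Rightarrow> (nat \<Rightarrow> nat \<Rightarrow> real) \<Rightarrow> ('v::finite) set \<Rightarrow> nat \<Rightarrow> nat \<Rightarrow> ('v \<Rightarrow> real) measure" where
  "pen_law l m c v f g n Q t Is s j =
     (\<Pi>\<^sub>M u\<in>UNIV. if u \<in> Is
        then interval_measure (phi l m c v f g n (\<lambda>k. pmf Q k * t s k) j)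
        else return borel 0)"

definition eq_strategy :: "nat \<Rightarrow> nat \<Rightarrow> real \<Rightarrow> real \<Rightarrow> (nat \<Rightarrow> real \<Rightarrow> real) \<Rightarrow> (nat \<Rightarrow> real \<Rightarrow> real)
    \<Rightarrow> nat \<Rightarrow> nat pmf \<Rightarrow> nat \<Rightarrow> (nat \<Rightarrow> ('v::finite) set) \<Rightarrow> (nat \<Rightarrow> nat \<Rightarrow> real)
    \<Rightarrow> nat \<Rightarrow> 'v action measure" where
  "eq_strategy l m c v f g n Q d I t j =
     measure_pmf (embed_pmf (\<lambda>s. if s \<in> {1..d} then t s j else 0)) \<bind>
       (\<lambda>s. distr (pen_law l m c v f g n Q t (I s) s j) actM (\<lambda>x. (I s, x)))"

end

theory Submission
  imports Defs
begin

text \<open>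
  Fix the selection \<open>I s\<close>. An opponent offers at a given node of \<open>I s\<close> with penalty at most
  \<open>x\<close> with probability \<open>F x = \<Sum>k. \<alpha> k * \<phi> k x\<close>, \<open>\<alpha> k = q k * t s k\<close>, independently of the
  other opponents, so a sale at penalty \<open>x\<close> happens with probability about \<open>W (F x)\<close>: fewer
  than \<open>m\<close> of the \<open>l - 1\<close> opponents undercut. The distributions \<open>\<phi> j\<close> live on consecutive
  intervals \<open>[L j, U j]\<close> and are defined so that \<open>(f j x - c) * W (F x) = p j - c\<close> on
  \<open>[L j, U j]\<close>; the ratio condition on the \<open>f j\<close> makes every other penalty worse for a primary
  in state \<open>j\<close>. Comparing the chains of intervals of two selections by induction along the
  states shows that the weighted payoffs \<open>card (I s) * (p j - c)\<close> coincide for all selections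
  used in state \<open>j\<close> and dominate the others. Every node of \<open>I s\<close> therefore earns at most
  \<open>eq_payoff j / card (I s)\<close>, with equality on the support, and the mean-valid inequality
  \<open>\<Sum>s. card (S \<inter> I s) / card (I s) \<le> 1\<close> bounds the payoff of any independent set \<open>S\<close> by
  \<open>eq_payoff j\<close>, which the equilibrium strategy attains.
\<close>

section \<open>The binomial tail \<open>W\<close>\<close>

definition binomial_lower_tail :: "nat \<Rightarrow> nat \<Rightarrow> real \<Rightarrow> real" where
  "binomial_lower_tail N m x = (\<Sum>i<m. real (N choose i) * x ^ i * (1 - x) ^ (N - i))"

lemma Wfun_eq_binomial_lower_tail:
  assumes "m < l"
  shows "Wfun l m x = binomial_lower_tail (l - 1) m x"
proof -
  have "1 = (x + (1 - x)) ^ (l - 1)" by simp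
  also have "\<dots> = (\<Sum>i\<le>l - 1. real ((l - 1) choose i) * x ^ i * (1 - x) ^ (l - 1 - i))"
    by (subst binomial_ring) (simp add: mult.assoc)
  also have "{..l - 1} = {..<m} \<union> {m..l - 1}" using assms by auto
  also have "(\<Sum>i\<in>{..<m} \<union> {m..l - 1}. real ((l - 1) choose i) * x ^ i * (1 - x) ^ (l - 1 - i))
      = binomial_lower_tail (l - 1) m x + wfun l m x"
    by (subst sum.union_disjoint) (auto simp: binomial_lower_tail_def wfun_def)
  finally show ?thesis by (simp add: Wfun_def)
qed

lemma binomial_term_has_real_derivative:
  "((\<lambda>x. a * x ^ k * (1 - x) ^ (N - k)) has_real_derivative
      a * (real k * x ^ (k - 1) * (1 - x) ^ (N - k) - real (N - k) * x ^ k * (1 - x) ^ (N - k - 1))) (at x)"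
  by (auto intro!: derivative_eq_intros simp: algebra_simps)

lemma binomial_lower_tail_has_real_derivative:
  assumes "1 \<le> m" "m \<le> N"
  shows "(binomial_lower_tail N m has_real_derivative
          - (real N * real ((N - 1) choose (m - 1)) * x ^ (m - 1) * (1 - x) ^ (N - m))) (at x)"
  using assms
proof (induction m rule: nat_induct_at_least)
  case base
  have "binomial_lower_tail N 1 = (\<lambda>x. (1 - x) ^ N)"
    by (simp add: binomial_lower_tail_def fun_eq_iff)
  then show ?case
    by (auto intro!: derivative_eq_intros)
next
  case (Suc m)
  have split: "binomial_lower_tail N (Suc m)
      = (\<lambda>x. binomial_lower_tail N m x + real (N choose m) * x ^ m * (1 - x) ^ (N - m))"
    by (simp add: binomial_lower_tail_def fun_eq_iff)
  have cancel: "- (P * X) + C * (a * X - b * Y) = - (R * Y)"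
    if "a * C = P" "b * C = R" for C a b P R X Y :: real
    unfolding that[symmetric] by (simp add: algebra_simps)
  have absorb: "real m * real (N choose m) = real N * real ((N - 1) choose (m - 1))"
    using binomial_absorption[of "m - 1" N] Suc.hyps by (simp flip: of_nat_mult)
  have absorb_comp: "real (N - m) * real (N choose m) = real N * real ((N - 1) choose m)"
    using binomial_absorb_comp[of N m] by (simp flip: of_nat_mult)
  have deriv_eq: "- (real N * real ((N - 1) choose (m - 1)) * x ^ (m - 1) * (1 - x) ^ (N - m))
      + real (N choose m) * (real m * x ^ (m - 1) * (1 - x) ^ (N - m)
                             - real (N - m) * x ^ m * (1 - x) ^ (N - m - 1))
    = - (real N * real ((N - 1) choose (Suc m - 1)) * x ^ (Suc m - 1) * (1 - x) ^ (N - Suc m))"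
    using cancel[OF absorb absorb_comp,
        where X = "x ^ (m - 1) * (1 - x) ^ (N - m)" and Y = "x ^ m * (1 - x) ^ (N - m - 1)"]
    by (simp add: mult.assoc)
  show ?case
    using DERIV_add[OF Suc.IH binomial_term_has_real_derivative[of "real (N choose m)" m N x]]
      Suc.prems
    unfolding split deriv_eq by simp
qed

lemma binomial_lower_tail_strict_antimono:
  assumes "1 \<le> m" "m \<le> N" "0 \<le> a" "a < b" "b \<le> 1"
  shows "binomial_lower_tail N m b < binomial_lower_tail N m a"
proof -
  obtain z where z: "a < z" "z < b"
    and mvt: "binomial_lower_tail N m b - binomial_lower_tail N m a
      = (b - a) * - (real N * real ((N - 1) choose (m - 1)) * z ^ (m - 1) * (1 - z) ^ (N - m))"
    using MVT2[OF \<open>a < b\<close> binomial_lower_tail_has_real_derivative[OF assms(1,2)]] by blast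
  have "0 < real N * real ((N - 1) choose (m - 1)) * z ^ (m - 1) * (1 - z) ^ (N - m)"
    using assms z by (intro mult_pos_pos) auto
  then have "0 < (b - a) * (real N * real ((N - 1) choose (m - 1)) * z ^ (m - 1) * (1 - z) ^ (N - m))"
    using z by (simp add: mult_pos_pos)
  with mvt show ?thesis by linarith
qed

lemma continuous_on_binomial_lower_tail: "continuous_on A (binomial_lower_tail N m)"
  unfolding binomial_lower_tail_def by (intro continuous_intros)

lemma binomial_lower_tail_0:
  assumes "1 \<le> m"
  shows "binomial_lower_tail N m 0 = 1"
proof -
  have "binomial_lower_tail N m 0 = (\<Sum>i<m. if i = 0 then 1 else 0)"
    unfolding binomial_lower_tail_def by (intro sum.cong) (auto simp: power_0_left)
  also have "\<dots> = 1" using assms by (subst sum.delta) auto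
  finally show ?thesis .
qed

lemma binomial_lower_tail_1: "m \<le> N \<Longrightarrow> binomial_lower_tail N m 1 = 0"
  unfolding binomial_lower_tail_def by (intro sum.neutral) auto

locale oligopoly =
  fixes l m :: nat
  assumes m_pos: "1 \<le> m" and m_less_l: "m < l"
begin

abbreviation W :: "real \<Rightarrow> real" where "W \<equiv> Wfun l m"
abbreviation w :: "real \<Rightarrow> real" where "w \<equiv> wfun l m"

lemma W_eq_binomial_lower_tail: "W = binomial_lower_tail (l - 1) m"
  using Wfun_eq_binomial_lower_tail[OF m_less_l] by (simp add: fun_eq_iff)

lemma w_eq: "w x = 1 - W x"
  by (simp add: Wfun_def)

lemma W_strict_antimono: "0 \<le> a \<Longrightarrow> a < b \<Longrightarrow> b \<le> 1 \<Longrightarrow> W b < W a"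
  unfolding W_eq_binomial_lower_tail using m_pos m_less_l
  by (intro binomial_lower_tail_strict_antimono) auto

lemma W_antimono: "0 \<le> a \<Longrightarrow> a \<le> b \<Longrightarrow> b \<le> 1 \<Longrightarrow> W b \<le> W a"
  using W_strict_antimono[of a b] by (cases "a = b") auto

lemma W_0 [simp]: "W 0 = 1"
  unfolding W_eq_binomial_lower_tail using m_pos by (rule binomial_lower_tail_0)

lemma W_1 [simp]: "W 1 = 0"
  unfolding W_eq_binomial_lower_tail using m_less_l by (intro binomial_lower_tail_1) auto

lemma continuous_on_w: "continuous_on A w"
  unfolding w_eq W_eq_binomial_lower_tail
  by (intro continuous_intros continuous_on_binomial_lower_tail)

lemma W_pos: "0 \<le> x \<Longrightarrow> x < 1 \<Longrightarrow> 0 < W x"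
  using W_strict_antimono[of x 1] by simp

lemma W_le_1: "0 \<le> x \<Longrightarrow> x \<le> 1 \<Longrightarrow> W x \<le> 1"
  using W_antimono[of 0 x] by simp

lemma W_nonneg: "0 \<le> x \<Longrightarrow> x \<le> 1 \<Longrightarrow> 0 \<le> W x"
  using W_antimono[of x 1] by simp

lemma w_strict_mono: "0 \<le> a \<Longrightarrow> a < b \<Longrightarrow> b \<le> 1 \<Longrightarrow> w a < w b"
  using W_strict_antimono[of a b] by (simp add: w_eq)

lemma w_inj: "0 \<le> a \<Longrightarrow> a \<le> 1 \<Longrightarrow> 0 \<le> b \<Longrightarrow> b \<le> 1 \<Longrightarrow> w a = w b \<Longrightarrow> a = b"
  using w_strict_mono[of a b] w_strict_mono[of b a] by (cases a b rule: linorder_cases) auto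

lemma w_range: "0 \<le> x \<Longrightarrow> x \<le> 1 \<Longrightarrow> 0 \<le> w x \<and> w x \<le> 1"
  using W_le_1[of x] W_nonneg[of x] by (simp add: w_eq)

lemma winv_wfun: "0 \<le> x \<Longrightarrow> x \<le> 1 \<Longrightarrow> winv l m (w x) = x"
  unfolding winv_def by (rule the_equality) (use w_inj in auto)

lemma wfun_winv:
  assumes "0 \<le> y" "y \<le> 1"
  shows "0 \<le> winv l m y \<and> winv l m y \<le> 1 \<and> w (winv l m y) = y"
proof -
  obtain x where "x \<in> {0..1}" "w x = y"
    using IVT'[of w 0 y 1] assms continuous_on_w by (auto simp: w_eq)
  then show ?thesis using winv_wfun[of x] by auto
qed

lemma winv_mono:
  assumes "0 \<le> y1" "y1 \<le> y2" "y2 \<le> 1"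
  shows "winv l m y1 \<le> winv l m y2"
proof (rule ccontr)
  assume "\<not> ?thesis"
  then have "w (winv l m y2) < w (winv l m y1)"
    using wfun_winv[of y1] wfun_winv[of y2] assms by (intro w_strict_mono) auto
  then show False using wfun_winv[of y1] wfun_winv[of y2] assms by auto
qed

lemma continuous_on_winv: "continuous_on {0..1} (winv l m)"
proof -
  have "w ` {0..1} = {0..1}"
  proof
    show "{0..1} \<subseteq> w ` {0..1}"
    proof
      fix y :: real assume "y \<in> {0..1}"
      then show "y \<in> w ` {0..1}"
        using wfun_winv[of y] by (intro image_eqI[of _ _ "winv l m y"]) auto
    qed
  qed (use w_range in auto)
  moreover have "continuous_on (w ` {0..1}) (winv l m)"
    by (rule continuous_on_inv) (use continuous_on_w winv_wfun in auto)
  ultimately show ?thesis by simp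
qed

end

section \<open>Indifference along a chain of penalty intervals\<close>

definition offer_cdf :: "nat \<Rightarrow> nat \<Rightarrow> real \<Rightarrow> real \<Rightarrow> (nat \<Rightarrow> real \<Rightarrow> real) \<Rightarrow> (nat \<Rightarrow> real \<Rightarrow> real)
    \<Rightarrow> nat \<Rightarrow> (nat \<Rightarrow> real) \<Rightarrow> real \<Rightarrow> real" where
  "offer_cdf l m c v f g n alpha x = (\<Sum>k=1..n. alpha k * phi l m c v f g n alpha k x)"

locale oligopoly_prices = oligopoly l m for l m +
  fixes c v :: real and f g :: "nat \<Rightarrow> real \<Rightarrow> real" and n :: nat
  assumes g_cont: "\<forall>j\<in>{1..n}. continuous_on UNIV (g j)"
    and g_mono: "\<forall>j\<in>{1..n}. strict_mono (g j)"
    and g_surj: "\<forall>j\<in>{1..n}. surj (g j)"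
    and f_inv: "\<forall>j\<in>{1..n}. f j = inv (g j)"
    and g_order: "\<forall>i\<in>{1..n}. \<forall>j\<in>{1..n}. \<forall>p. j < i \<longrightarrow> g i p < g j p"
    and ratio: "\<forall>i\<in>{1..n}. \<forall>j\<in>{1..n}. \<forall>x y. i < j \<and> g i c < y \<and> y < x \<longrightarrow>
                  (f i y - c) / (f j y - c) < (f i x - c) / (f j x - c)"
    and f1v: "f 1 v > c"
begin

lemma f_g: "j \<in> {1..n} \<Longrightarrow> f j (g j y) = y"
  using f_inv g_mono by (simp add: inv_f_f strict_mono_imp_inj_on)

lemma g_f: "j \<in> {1..n} \<Longrightarrow> g j (f j x) = x"
  using f_inv g_surj by (simp add: surj_f_inv_f)

lemma f_le_f_iff: "j \<in> {1..n} \<Longrightarrow> f j x \<le> f j y \<longleftrightarrow> x \<le> y"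
  using g_mono g_f[of j x] g_f[of j y] by (metis strict_mono_less_eq)

lemma f_less_f_iff: "j \<in> {1..n} \<Longrightarrow> f j x < f j y \<longleftrightarrow> x < y"
  using f_le_f_iff[of j y x] by auto

lemma isCont_f:
  assumes j: "j \<in> {1..n}"
  shows "isCont (f j) x"
proof -
  have "isCont (f j) (g j (f j x))"
    by (rule isCont_inverse_function2[of "f j x - 1" _ "f j x + 1"])
       (use j f_g g_cont in \<open>auto simp: continuous_on_eq_continuous_at\<close>)
  then show ?thesis using g_f[OF j] by simp
qed

lemma f_less_f_of_less:
  assumes "i \<in> {1..n}" "j \<in> {1..n}" "i < j"
  shows "f i x < f j x"
proof -
  have "g j (f i x) < g i (f i x)" using g_order assms by auto
  then have "f j (g j (f i x)) < f j x" using g_f f_less_f_iff assms by simp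
  then show ?thesis using f_g assms by simp
qed

lemma g_c_less_iff: "j \<in> {1..n} \<Longrightarrow> g j c < y \<longleftrightarrow> c < f j y"
  using f_less_f_iff[of j "g j c" y] f_g by simp

end

locale penalty_chain = oligopoly_prices +
  fixes alpha :: "nat \<Rightarrow> real"
  assumes alpha_nonneg: "\<forall>k\<in>{1..n}. 0 \<le> alpha k"
    and alpha_sum_less_1: "(\<Sum>k=1..n. alpha k) < 1"
begin

abbreviation \<Gamma> :: "nat \<Rightarrow> real" where "\<Gamma> \<equiv> Gam n alpha"
abbreviation U :: "nat \<Rightarrow> real" where "U \<equiv> Upen l m c v f g n alpha"
abbreviation L :: "nat \<Rightarrow> real" where "L \<equiv> Lpen l m c v f g n alpha"
abbreviation p :: "nat \<Rightarrow> real" where "p \<equiv> ppr l m c v f g n alpha"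
abbreviation \<phi> :: "nat \<Rightarrow> real \<Rightarrow> real" where "\<phi> \<equiv> phi l m c v f g n alpha"
abbreviation F :: "real \<Rightarrow> real" where "F \<equiv> offer_cdf l m c v f g n alpha"

lemma Gam_nonneg: "1 \<le> j \<Longrightarrow> 0 \<le> \<Gamma> j"
  unfolding Gam_def using alpha_nonneg by (intro sum_nonneg) auto

lemma Gam_less_1: "1 \<le> j \<Longrightarrow> \<Gamma> j < 1"
proof -
  assume "1 \<le> j"
  then have "\<Gamma> j \<le> (\<Sum>k=1..n. alpha k)"
    unfolding Gam_def using alpha_nonneg by (intro sum_mono2) auto
  then show ?thesis using alpha_sum_less_1 by simp
qed

lemma Gam_Suc: "j \<in> {1..n} \<Longrightarrow> \<Gamma> j = alpha j + \<Gamma> (Suc j)"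
  unfolding Gam_def by (simp add: sum.atLeast_Suc_atMost)

lemma Gam_Suc_n: "\<Gamma> (Suc n) = 0"
  unfolding Gam_def by simp

lemma W_Gam_pos: "1 \<le> j \<Longrightarrow> 0 < W (\<Gamma> j)"
  using Gam_nonneg Gam_less_1 W_pos by auto

lemma W_Gam_le_W_Gam_Suc: "j \<in> {1..n} \<Longrightarrow> W (\<Gamma> j) \<le> W (\<Gamma> (Suc j))"
  using Gam_nonneg[of "Suc j"] Gam_less_1[of j] alpha_nonneg Gam_Suc[of j] by (intro W_antimono) auto

lemma p_eq: "p j - c = (f j (U j) - c) * W (\<Gamma> j)"
  by (simp add: ppr_def pr_of_def)

lemma U_Suc: "1 \<le> j \<Longrightarrow> U (Suc j) = L j"
  by (cases j) (auto simp: Lpen_def)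

lemma f_L: "j \<in> {1..n} \<Longrightarrow> f j (L j) - c = (p j - c) / W (\<Gamma> (Suc j))"
  using f_g by (simp add: Lpen_def low_of_def ppr_def)

lemma f_L_eq: "j \<in> {1..n} \<Longrightarrow> f j (L j) - c = (f j (U j) - c) * W (\<Gamma> j) / W (\<Gamma> (Suc j))"
  using f_L p_eq by simp

lemma L_le_U_if:
  assumes j: "j \<in> {1..n}" and "c < f j (U j)"
  shows "L j \<le> U j"
proof -
  have "f j (L j) - c \<le> (f j (U j) - c) * W (\<Gamma> (Suc j)) / W (\<Gamma> (Suc j))"
    unfolding f_L_eq[OF j] using assms W_Gam_le_W_Gam_Suc[OF j] W_Gam_pos[of "Suc j"]
    by (intro divide_right_mono mult_left_mono) auto
  then show ?thesis using W_Gam_pos[of "Suc j"] f_le_f_iff[OF j] j by simp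
qed

lemma c_less_f_L_if:
  assumes j: "j \<in> {1..n}" and "c < f j (U j)"
  shows "c < f j (L j)"
proof -
  have "0 < (f j (U j) - c) * W (\<Gamma> j) / W (\<Gamma> (Suc j))"
    using assms W_Gam_pos[of j] W_Gam_pos[of "Suc j"] by (intro divide_pos_pos mult_pos_pos) auto
  then show ?thesis using f_L_eq[OF j] by simp
qed

lemma U_profitable: "1 \<le> j \<Longrightarrow> j \<le> n \<Longrightarrow> c < f j (U j) \<and> U j \<le> v"
proof (induction j rule: nat_induct_at_least)
  case base
  then show ?case using f1v by simp
next
  case (Suc j)
  then have j: "j \<in> {1..n}" and IH: "c < f j (U j)" "U j \<le> v" by auto
  have "c < f j (L j)" using c_less_f_L_if[OF j IH(1)] .
  also have "\<dots> < f (Suc j) (L j)" using f_less_f_of_less Suc by simp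
  finally show ?case using L_le_U_if[OF j IH(1)] IH(2) U_Suc j by simp
qed

lemma c_less_f_U: "j \<in> {1..n} \<Longrightarrow> c < f j (U j)"
  using U_profitable by simp

lemma U_le_v: "j \<in> {1..n} \<Longrightarrow> U j \<le> v"
  using U_profitable by simp

lemma c_less_p:
  assumes j: "j \<in> {1..n}"
  shows "c < p j"
proof -
  have "0 < (f j (U j) - c) * W (\<Gamma> j)"
    using c_less_f_U[OF j] W_Gam_pos[of j] j by (intro mult_pos_pos) auto
  then show ?thesis using p_eq[of j] by simp
qed

lemma c_less_f_L: "j \<in> {1..n} \<Longrightarrow> c < f j (L j)"
  using c_less_f_L_if c_less_f_U by blast

lemma L_le_U: "j \<in> {1..n} \<Longrightarrow> L j \<le> U j"
  using L_le_U_if c_less_f_U by blast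

lemma L_less_U:
  assumes j: "j \<in> {1..n}" and "0 < alpha j"
  shows "L j < U j"
proof -
  have "W (\<Gamma> j) < W (\<Gamma> (Suc j))"
    using Gam_nonneg[of "Suc j"] Gam_less_1[of j] Gam_Suc[OF j] assms
    by (intro W_strict_antimono) auto
  then have "f j (L j) - c < (f j (U j) - c) * W (\<Gamma> (Suc j)) / W (\<Gamma> (Suc j))"
    unfolding f_L_eq[OF j] using c_less_f_U[OF j] W_Gam_pos[of "Suc j"]
    by (intro divide_strict_right_mono mult_strict_left_mono) auto
  then show ?thesis using W_Gam_pos[of "Suc j"] f_less_f_iff[OF j] j by simp
qed

lemma U_antimono:
  assumes "1 \<le> j" "j \<le> k" "k \<le> n"
  shows "U k \<le> U j"
  using assms(2,3)
proof (induction k rule: dec_induct)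
  case (step k)
  then show ?case using L_le_U[of k] U_Suc[of k] assms(1) by simp
qed simp

lemma U_le_L: "1 \<le> j \<Longrightarrow> j < k \<Longrightarrow> k \<le> n \<Longrightarrow> U k \<le> L j"
  using U_antimono[of "Suc j" k] U_Suc[of j] by simp

lemma W_Gam_Suc_eq:
  assumes j: "j \<in> {1..n}"
  shows "W (\<Gamma> (Suc j)) = (p j - c) / (f j (L j) - c)"
proof -
  have "W (\<Gamma> (Suc j)) * (f j (L j) - c) = p j - c"
    unfolding f_L[OF j] using W_Gam_pos[of "Suc j"] j by simp
  then show ?thesis using c_less_f_L[OF j] by (simp add: eq_divide_eq)
qed

lemma intervals_cover:
  "1 \<le> j \<Longrightarrow> j \<le> n \<Longrightarrow> L j \<le> x \<Longrightarrow> x \<le> v \<Longrightarrow> \<exists>k\<in>{1..j}. L k \<le> x \<and> x \<le> U k"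
proof (induction j rule: nat_induct_at_least)
  case (Suc j)
  show ?case
  proof (cases "x \<le> U (Suc j)")
    case False
    then have "L j \<le> x" using U_Suc[of j] Suc by simp
    then show ?thesis using Suc by force
  qed (use Suc in auto)
qed auto

definition deviation_gain :: "nat \<Rightarrow> nat \<Rightarrow> real \<Rightarrow> real" where
  "deviation_gain i k y = (f i y - c) / (f k y - c) * (p k - c)"

lemma deviation_gain_self: "i \<in> {1..n} \<Longrightarrow> L i \<le> y \<Longrightarrow> deviation_gain i i y = p i - c"
  using c_less_f_L[of i] f_le_f_iff[of i "L i" y] by (simp add: deviation_gain_def)

lemma deviation_gain_junction:
  assumes k: "k \<in> {1..n}" "Suc k \<le> n"
  shows "deviation_gain i k (L k) = deviation_gain i (Suc k) (U (Suc k))"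
proof -
  have "deviation_gain i k (L k) = (f i (L k) - c) * W (\<Gamma> (Suc k))"
    using W_Gam_Suc_eq[OF k(1)] by (simp add: deviation_gain_def)
  also have "\<dots> = deviation_gain i (Suc k) (U (Suc k))"
    using p_eq[of "Suc k"] c_less_f_U[of "Suc k"] U_Suc[of k] k by (simp add: deviation_gain_def)
  finally show ?thesis .
qed

lemma deviation_gain_nonpos:
  "k \<in> {1..n} \<Longrightarrow> L k \<le> y \<Longrightarrow> f i y \<le> c \<Longrightarrow> deviation_gain i k y \<le> 0"
  using c_less_f_L[of k] f_le_f_iff[of k "L k" y] c_less_p[of k]
  by (simp add: deviation_gain_def mult_nonpos_nonneg divide_nonpos_pos)

lemma deviation_gain_le_at_U:
  assumes i: "i \<in> {1..n}" and k: "k \<in> {1..n}" and "i < k"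
    and y: "L k \<le> y" "y \<le> U k" and "c < f i y"
  shows "deviation_gain i k y \<le> deviation_gain i k (U k)"
proof (cases "y < U k")
  case True
  then have "(f i y - c) / (f k y - c) < (f i (U k) - c) / (f k (U k) - c)"
    using ratio g_c_less_iff[OF i] assms by blast
  then show ?thesis
    unfolding deviation_gain_def using c_less_p[OF k] by (intro mult_right_mono) auto
qed (use y in simp)

lemma deviation_gain_le_at_L:
  assumes i: "i \<in> {1..n}" and k: "k \<in> {1..n}" and "k < i" and y: "L k \<le> y"
  shows "deviation_gain i k y \<le> deviation_gain i k (L k)"
proof (cases "L k < y")
  case True
  have cL: "c < f k (L k)" and cy: "c < f k y"
    using c_less_f_L[OF k] f_le_f_iff[OF k, of "L k" y] y by auto
  moreover have "f k (L k) < f i (L k)" "f k y < f i y"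
    using f_less_f_of_less k i \<open>k < i\<close> by auto
  moreover have "(f k (L k) - c) / (f i (L k) - c) < (f k y - c) / (f i y - c)"
    using ratio g_c_less_iff[OF k] cL True k i \<open>k < i\<close> by blast
  ultimately have "(f i y - c) / (f k y - c) \<le> (f i (L k) - c) / (f k (L k) - c)"
    by (simp add: field_simps)
  then show ?thesis
    unfolding deviation_gain_def using c_less_p[OF k] by (intro mult_right_mono) auto
qed (use y in simp)

lemma deviation_gain_le_of_le:
  assumes i: "i \<in> {1..n}" and "i \<le> k" "k \<le> n"
  shows "L k \<le> y \<Longrightarrow> y \<le> U k \<Longrightarrow> deviation_gain i k y \<le> p i - c"
  using assms(2,3)
proof (induction k arbitrary: y rule: dec_induct)
  case base
  then show ?case using deviation_gain_self[OF i] by simp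
next
  case (step k)
  have k: "k \<in> {1..n}" "Suc k \<le> n" and k': "Suc k \<in> {1..n}" using step i by auto
  show ?case
  proof (cases "f i y \<le> c")
    case True
    then show ?thesis using deviation_gain_nonpos[OF k'] step c_less_p[OF i] by fastforce
  next
    case False
    then have "deviation_gain i (Suc k) y \<le> deviation_gain i (Suc k) (U (Suc k))"
      using deviation_gain_le_at_U[OF i k'] step by simp
    also have "\<dots> = deviation_gain i k (L k)"
      by (rule deviation_gain_junction[OF k, symmetric])
    also have "\<dots> \<le> p i - c"
      using step.IH L_le_U[OF k(1)] k by simp
    finally show ?thesis .
  qed
qed

lemma deviation_gain_le_of_ge:
  assumes i: "i \<in> {1..n}" and "1 \<le> k" "k \<le> i"
  shows "L k \<le> y \<Longrightarrow> y \<le> U k \<Longrightarrow> deviation_gain i k y \<le> p i - c"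
  using assms(3,2)
proof (induction k arbitrary: y rule: inc_induct)
  case base
  then show ?case using deviation_gain_self[OF i] by simp
next
  case (step k)
  have k: "k \<in> {1..n}" "Suc k \<le> n" using step i by auto
  have "deviation_gain i k y \<le> deviation_gain i k (L k)"
    using deviation_gain_le_at_L[OF i k(1)] step by simp
  also have "\<dots> = deviation_gain i (Suc k) (U (Suc k))"
    by (rule deviation_gain_junction[OF k])
  also have "\<dots> \<le> p i - c"
    using step.IH L_le_U[of "Suc k"] k by simp
  finally show ?case .
qed

lemma deviation_gain_le:
  "i \<in> {1..n} \<Longrightarrow> k \<in> {1..n} \<Longrightarrow> L k \<le> y \<Longrightarrow> y \<le> U k \<Longrightarrow> deviation_gain i k y \<le> p i - c"
  using deviation_gain_le_of_le[of i k y] deviation_gain_le_of_ge[of i k y] by (cases "i \<le> k") auto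

text \<open>At penalty \<open>x\<close> a primary in state \<open>j\<close> is indifferent, earning \<open>p j - c\<close>, exactly when
  \<open>w (F x) = w_level j x\<close>; this is the formula inside \<open>phi\<close>.\<close>
definition w_level :: "nat \<Rightarrow> real \<Rightarrow> real" where
  "w_level j x = (f j x - p j) / (f j x - c)"

lemma phi_eq:
  "\<phi> j x = (if x < L j then 0 else if x \<le> U j then (winv l m (w_level j x) - \<Gamma> (Suc j)) / alpha j else 1)"
  by (simp add: phi_def w_level_def)

lemma Gam_range: "1 \<le> j \<Longrightarrow> 0 \<le> \<Gamma> j \<and> \<Gamma> j \<le> 1"
  using Gam_nonneg Gam_less_1 by (simp add: less_imp_le)

lemma c_less_f: "j \<in> {1..n} \<Longrightarrow> L j \<le> x \<Longrightarrow> c < f j x"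
  using c_less_f_L[of j] f_le_f_iff[of j "L j" x] by simp

lemma w_level_eq: "c < f j x \<Longrightarrow> w_level j x = 1 - (p j - c) / (f j x - c)"
  unfolding w_level_def by (simp add: field_simps)

lemma w_level_L: "j \<in> {1..n} \<Longrightarrow> w_level j (L j) = w (\<Gamma> (Suc j))"
  using w_level_eq[of j "L j"] c_less_f_L[of j] W_Gam_Suc_eq[of j] by (simp add: w_eq)

lemma w_level_U: "j \<in> {1..n} \<Longrightarrow> w_level j (U j) = w (\<Gamma> j)"
  using w_level_eq[of j "U j"] c_less_f_U[of j] p_eq[of j] by (simp add: w_eq)

lemma w_level_mono:
  assumes j: "j \<in> {1..n}" and "L j \<le> x" "x \<le> y"
  shows "w_level j x \<le> w_level j y"
proof -
  have cx: "c < f j x" using c_less_f[OF j] assms by simp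
  moreover have "f j x \<le> f j y" using f_le_f_iff[OF j] assms by simp
  ultimately have "(p j - c) / (f j y - c) \<le> (p j - c) / (f j x - c)"
    using c_less_p[OF j] by (intro divide_left_mono) auto
  then show ?thesis using w_level_eq cx \<open>f j x \<le> f j y\<close> by simp
qed

lemma w_level_range:
  assumes j: "j \<in> {1..n}" and x: "L j \<le> x" "x \<le> U j"
  shows "0 \<le> w_level j x \<and> w_level j x \<le> 1"
proof -
  have "w (\<Gamma> (Suc j)) \<le> w_level j x" "w_level j x \<le> w (\<Gamma> j)"
    using w_level_mono[OF j order.refl x(1)] w_level_mono[OF j x] w_level_L[OF j] w_level_U[OF j]
    by simp_all
  moreover have "0 \<le> w (\<Gamma> (Suc j))" "w (\<Gamma> j) \<le> 1"
    using w_range Gam_range j by auto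
  ultimately show ?thesis by linarith
qed

lemma winv_w_level_L: "j \<in> {1..n} \<Longrightarrow> winv l m (w_level j (L j)) = \<Gamma> (Suc j)"
  using w_level_L[of j] winv_wfun[of "\<Gamma> (Suc j)"] Gam_range[of "Suc j"] by simp

lemma winv_w_level_U: "j \<in> {1..n} \<Longrightarrow> winv l m (w_level j (U j)) = \<Gamma> j"
  using w_level_U[of j] winv_wfun[of "\<Gamma> j"] Gam_range[of j] by simp

lemma L_eq_U:
  assumes j: "j \<in> {1..n}" and "alpha j = 0"
  shows "L j = U j"
proof -
  have "w_level j (L j) = w_level j (U j)"
    using w_level_L[OF j] w_level_U[OF j] Gam_Suc[OF j] assms by simp
  then have "(p j - c) / (f j (L j) - c) = (p j - c) / (f j (U j) - c)"
    using w_level_eq c_less_f_L[OF j] c_less_f_U[OF j] by simp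
  then have "f j (L j) = f j (U j)"
    using c_less_p[OF j] c_less_f_L[OF j] c_less_f_U[OF j] by (simp add: field_simps)
  then show ?thesis using f_le_f_iff[OF j, of "L j" "U j"] f_le_f_iff[OF j, of "U j" "L j"] by simp
qed

lemma alpha_phi_below: "j \<in> {1..n} \<Longrightarrow> x \<le> L j \<Longrightarrow> alpha j * \<phi> j x = 0"
  using winv_w_level_L[of j] L_le_U[of j] by (auto simp: phi_eq)

lemma alpha_phi_above:
  assumes j: "j \<in> {1..n}" and x: "U j \<le> x"
  shows "alpha j * \<phi> j x = alpha j"
proof (cases "alpha j = 0")
  case False
  then have "L j < U j" using L_less_U[OF j] alpha_nonneg j by (simp add: less_le)
  then show ?thesis
    using x winv_w_level_U[OF j] Gam_Suc[OF j] False by (auto simp: phi_eq)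
qed simp

lemma alpha_phi_between:
  assumes j: "j \<in> {1..n}" and x: "L j \<le> x" "x \<le> U j"
  shows "alpha j * \<phi> j x = winv l m (w_level j x) - \<Gamma> (Suc j)"
proof (cases "alpha j = 0")
  case True
  then have "x = L j" using L_eq_U[OF j] x by simp
  then show ?thesis using True winv_w_level_L[OF j] by simp
qed (use x in \<open>simp add: phi_eq\<close>)

lemma offer_cdf_between:
  assumes j: "j \<in> {1..n}" and x: "L j \<le> x" "x \<le> U j"
  shows "F x = winv l m (w_level j x)"
proof -
  have split: "{1..n} = {1..<j} \<union> ({j} \<union> {Suc j..n})" using j by auto
  have "(\<Sum>k\<in>{1..<j}. alpha k * \<phi> k x) = 0"
    using U_le_L[of _ j] alpha_phi_below j x by (intro sum.neutral ballI) (simp add: order_trans)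
  moreover have "(\<Sum>k\<in>{Suc j..n}. alpha k * \<phi> k x) = \<Gamma> (Suc j)"
    unfolding Gam_def
  proof (intro sum.cong refl)
    fix k assume "k \<in> {Suc j..n}"
    then show "alpha k * \<phi> k x = alpha k"
      using U_le_L[of j k] alpha_phi_above[of k x] j x by simp
  qed
  moreover have "F x = (\<Sum>k\<in>{1..<j}. alpha k * \<phi> k x)
      + (alpha j * \<phi> j x + (\<Sum>k\<in>{Suc j..n}. alpha k * \<phi> k x))"
    unfolding offer_cdf_def split by (subst sum.union_disjoint, auto)+
  ultimately show ?thesis using alpha_phi_between[OF j x] by simp
qed

lemma offer_cdf_below:
  assumes "1 \<le> n" "x < L n"
  shows "F x = 0"
  unfolding offer_cdf_def
proof (intro sum.neutral ballI)
  fix k assume k: "k \<in> {1..n}"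
  have "L n \<le> L k"
    using U_le_L[of k n] L_le_U[of n] k assms(1) by (cases "k = n") auto
  then show "alpha k * \<phi> k x = 0" using alpha_phi_below[OF k, of x] assms(2) by simp
qed

lemma offer_cdf_range:
  assumes "1 \<le> n" "x \<le> v"
  shows "0 \<le> F x \<and> F x \<le> 1"
proof (cases "x < L n")
  case False
  then obtain j where "j \<in> {1..n}" "L j \<le> x" "x \<le> U j"
    using intervals_cover[of n x] assms by auto
  then show ?thesis
    using offer_cdf_between wfun_winv[of "w_level j x"] w_level_range by simp
qed (use offer_cdf_below assms in simp)

lemma indifference:
  assumes j: "j \<in> {1..n}" and x: "L j \<le> x" "x \<le> U j"
  shows "(f j x - c) * W (F x) = p j - c"
proof -
  have "W (F x) = 1 - w_level j x"
    using offer_cdf_between[OF j x] wfun_winv[of "w_level j x"] w_level_range[OF j x]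
    by (simp add: w_eq)
  also have "\<dots> = (p j - c) / (f j x - c)"
    using w_level_eq c_less_f[OF j x(1)] by simp
  finally show ?thesis using c_less_f[OF j x(1)] by simp
qed

lemma deviation_bound:
  assumes i: "i \<in> {1..n}" and x: "x \<le> v"
  shows "(f i x - c) * W (F x) \<le> p i - c"
proof (cases "x < L n")
  case True
  have n: "n \<in> {1..n}" using i by simp
  have "f i x - c \<le> f i (L n) - c" using True f_le_f_iff[OF i, of x "L n"] by simp
  also have "\<dots> = deviation_gain i n (L n)"
    using W_Gam_Suc_eq[OF n] Gam_Suc_n c_less_f_L[OF n] by (simp add: deviation_gain_def field_simps)
  also have "\<dots> \<le> p i - c" using deviation_gain_le[OF i n] L_le_U[OF n] by simp
  finally show ?thesis using offer_cdf_below[of x] i True by simp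
next
  case False
  then obtain k where k: "k \<in> {1..n}" "L k \<le> x" "x \<le> U k"
    using intervals_cover[of n x] i x by auto
  have "W (F x) = (p k - c) / (f k x - c)"
    using indifference[OF k] c_less_f[OF k(1,2)] by (simp add: field_simps)
  then show ?thesis using deviation_gain_le[OF i k] by (simp add: deviation_gain_def)
qed

lemma phi_clamp:
  assumes j: "j \<in> {1..n}" and a: "0 < alpha j"
  shows "\<phi> j x = (winv l m (w_level j (max (L j) (min (U j) x))) - \<Gamma> (Suc j)) / alpha j"
proof -
  have LU: "L j < U j" using L_less_U[OF j a] .
  consider "x < L j" | "L j \<le> x" "x \<le> U j" | "U j < x" by linarith
  then show ?thesis
  proof cases
    case 1
    then show ?thesis using LU winv_w_level_L[OF j] by (simp add: phi_eq)
  next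
    case 3
    then show ?thesis using LU winv_w_level_U[OF j] Gam_Suc[OF j] a by (simp add: phi_eq)
  qed (simp add: phi_eq)
qed

lemma continuous_on_w_level:
  assumes j: "j \<in> {1..n}"
  shows "continuous_on {L j..U j} (w_level j)"
proof -
  have "continuous_on {L j..U j} (f j)"
    using isCont_f[OF j] by (intro continuous_at_imp_continuous_on) auto
  moreover have "\<forall>x\<in>{L j..U j}. f j x - c \<noteq> 0"
    using c_less_f[OF j] by fastforce
  ultimately show ?thesis
    unfolding w_level_def[abs_def] by (intro continuous_intros) auto
qed

lemma continuous_phi:
  assumes j: "j \<in> {1..n}" and a: "0 < alpha j"
  shows "continuous_on UNIV (\<phi> j)"
proof -
  have "continuous_on {L j..U j} (\<lambda>y. winv l m (w_level j y))"
    by (rule continuous_on_compose2[OF continuous_on_winv continuous_on_w_level[OF j]])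
       (use w_level_range[OF j] in auto)
  then have "continuous_on {L j..U j} (\<lambda>y. (winv l m (w_level j y) - \<Gamma> (Suc j)) / alpha j)"
    using a by (intro continuous_intros) auto
  moreover have "continuous_on UNIV (\<lambda>x. max (L j) (min (U j) x))"
    by (intro continuous_intros)
  ultimately have "continuous_on UNIV
      (\<lambda>x. (winv l m (w_level j (max (L j) (min (U j) x))) - \<Gamma> (Suc j)) / alpha j)"
    by (rule continuous_on_compose2) (use L_le_U[OF j] in auto)
  then show ?thesis using phi_clamp[OF j a] by simp
qed

lemma mono_phi:
  assumes j: "j \<in> {1..n}" and a: "0 < alpha j"
  shows "mono (\<phi> j)"
proof
  fix x y :: real assume "x \<le> y"
  define x' y' where "x' = max (L j) (min (U j) x)" and "y' = max (L j) (min (U j) y)"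
  have x': "L j \<le> x'" "x' \<le> U j" "x' \<le> y'" and y': "L j \<le> y'" "y' \<le> U j"
    using \<open>x \<le> y\<close> L_le_U[OF j] by (auto simp: x'_def y'_def)
  have "winv l m (w_level j x') \<le> winv l m (w_level j y')"
    using w_level_range[OF j x'(1,2)] w_level_range[OF j y'] w_level_mono[OF j x'(1,3)]
    by (intro winv_mono) auto
  then show "\<phi> j x \<le> \<phi> j y"
    unfolding phi_clamp[OF j a] x'_def[symmetric] y'_def[symmetric] using a
    by (intro divide_right_mono) auto
qed

lemma phi_at_bot: "(\<phi> j \<longlongrightarrow> 0) at_bot"
proof (rule tendsto_eventually)
  show "eventually (\<lambda>x. \<phi> j x = 0) at_bot"
    unfolding eventually_at_bot_linorder by (rule exI[of _ "L j - 1"]) (auto simp: phi_eq)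
qed

lemma phi_at_top: "j \<in> {1..n} \<Longrightarrow> (\<phi> j \<longlongrightarrow> 1) at_top"
proof (rule tendsto_eventually)
  assume "j \<in> {1..n}"
  then show "eventually (\<lambda>x. \<phi> j x = 1) at_top"
    unfolding eventually_at_top_linorder
    by (rule_tac exI[of _ "U j + 1"]) (use L_le_U[of j] in \<open>auto simp: phi_eq\<close>)
qed

lemma phi_distribution:
  assumes j: "j \<in> {1..n}" and a: "0 < alpha j"
  shows "real_distribution (interval_measure (\<phi> j))"
    and "emeasure (interval_measure (\<phi> j)) {..x} = \<phi> j x"
    and "measure (interval_measure (\<phi> j)) {..x} = \<phi> j x"
proof -
  have mono: "\<And>x y. x \<le> y \<Longrightarrow> \<phi> j x \<le> \<phi> j y" using mono_phi[OF j a] by (simp add: mono_def)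
  have rcont: "\<And>x. continuous (at_right x) (\<phi> j)"
    using continuous_phi[OF j a]
    by (simp add: continuous_on_eq_continuous_at continuous_at_imp_continuous_at_within)
  show "real_distribution (interval_measure (\<phi> j))"
    by (rule real_distribution_interval_measure[OF mono rcont phi_at_bot phi_at_top[OF j]])
  show "emeasure (interval_measure (\<phi> j)) {..x} = \<phi> j x"
    by (rule emeasure_interval_measure_Iic[OF mono rcont phi_at_bot])
  show "measure (interval_measure (\<phi> j)) {..x} = \<phi> j x"
    by (rule measure_interval_measure_Iic[OF mono rcont phi_at_bot])
qed

lemma AE_phi_between:
  assumes j: "j \<in> {1..n}" and a: "0 < alpha j"
  shows "AE y in interval_measure (\<phi> j). L j \<le> y \<and> y \<le> U j"
proof -
  interpret D: real_distribution "interval_measure (\<phi> j)" by (rule phi_distribution(1)[OF j a])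
  have "emeasure (interval_measure (\<phi> j)) {..L j} = 0"
    using phi_distribution(2)[OF j a] alpha_phi_below[OF j, of "L j"] a by simp
  moreover have "measure (interval_measure (\<phi> j)) (UNIV - {..U j}) = 0"
    using D.prob_compl[of "{..U j}"] phi_distribution(3)[OF j a] alpha_phi_above[OF j, of "U j"] a
    by simp
  then have "emeasure (interval_measure (\<phi> j)) {U j<..} = 0"
    by (simp add: D.emeasure_eq_measure Compl_eq_Diff_UNIV[symmetric] not_le)
  ultimately have "emeasure (interval_measure (\<phi> j)) ({..L j} \<union> {U j<..}) = 0"
    using emeasure_subadditive[of "{..L j}" "interval_measure (\<phi> j)" "{U j<..}"]
    by (simp add: add_nonneg_eq_0_iff)
  then show ?thesis by (intro AE_I[where N="{..L j} \<union> {U j<..}"]) auto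
qed

end

section \<open>Comparing the chains of different selections\<close>

locale penalty_chain_pair =
  A: penalty_chain l m c v f g n a + B: penalty_chain l m c v f g n b
  for l m :: nat and c v :: real and f g :: "nat \<Rightarrow> real \<Rightarrow> real" and n :: nat
    and a b :: "nat \<Rightarrow> real"
begin

lemma W_offer_cdf_le_of_p_le:
  assumes MA: "0 \<le> MA" and j: "j \<in> {1..n}"
    and p_le: "MA * (A.p j - c) \<le> MB * (B.p j - c)"
    and x: "B.L j \<le> x" "x \<le> B.U j"
  shows "MA * Wfun l m (A.F x) \<le> MB * Wfun l m (B.F x)"
proof -
  have "(f j x - c) * (MA * Wfun l m (A.F x)) = MA * ((f j x - c) * Wfun l m (A.F x))"
    by (simp add: mult_ac)
  also have "\<dots> \<le> MA * (A.p j - c)"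
    using A.deviation_bound[OF j] B.U_le_v[OF j] x MA by (intro mult_left_mono) auto
  also have "\<dots> \<le> MB * (B.p j - c)" by (rule p_le)
  also have "\<dots> = (f j x - c) * (MB * Wfun l m (B.F x))"
    using B.indifference[OF j x] by (simp add: mult_ac)
  finally have "(f j x - c) * (MA * Wfun l m (A.F x)) \<le> (f j x - c) * (MB * Wfun l m (B.F x))" .
  then show ?thesis
    by (rule mult_left_le_imp_le) (use B.c_less_f[OF j x(1)] in simp)
qed

lemma p_le_of_W_le:
  assumes MA: "0 \<le> MA" and MB: "0 \<le> MB" and j: "j \<in> {1..n}"
    and W_le: "MA * Wfun l m (A.\<Gamma> j) \<le> MB * Wfun l m (B.\<Gamma> j)"
    and F_le: "\<And>x. B.U j < x \<Longrightarrow> x \<le> v \<Longrightarrow> MA * Wfun l m (A.F x) \<le> MB * Wfun l m (B.F x)"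
  shows "MA * (A.p j - c) \<le> MB * (B.p j - c)"
proof (cases "A.U j \<le> B.U j")
  case True
  have "MA * (A.p j - c) = (f j (A.U j) - c) * (MA * Wfun l m (A.\<Gamma> j))"
    using A.p_eq[of j] by (simp add: mult_ac)
  also have "\<dots> \<le> (f j (A.U j) - c) * (MB * Wfun l m (B.\<Gamma> j))"
    using W_le A.c_less_f_U[OF j] by (intro mult_left_mono) auto
  also have "\<dots> \<le> (f j (B.U j) - c) * (MB * Wfun l m (B.\<Gamma> j))"
    using True A.f_le_f_iff[OF j] MB B.W_Gam_pos[of j] j by (intro mult_right_mono) auto
  also have "\<dots> = MB * (B.p j - c)"
    using B.p_eq[of j] by (simp add: mult_ac)
  finally show ?thesis .
next
  case False
  have "MA * (A.p j - c) = (f j (A.U j) - c) * (MA * Wfun l m (A.F (A.U j)))"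
    using A.indifference[OF j A.L_le_U[OF j] order.refl] by (simp add: mult_ac)
  also have "\<dots> \<le> (f j (A.U j) - c) * (MB * Wfun l m (B.F (A.U j)))"
    using F_le[of "A.U j"] False A.U_le_v[OF j] A.c_less_f_U[OF j] by (intro mult_left_mono) auto
  also have "\<dots> = MB * ((f j (A.U j) - c) * Wfun l m (B.F (A.U j)))"
    by (simp add: mult_ac)
  also have "\<dots> \<le> MB * (B.p j - c)"
    using B.deviation_bound[OF j A.U_le_v[OF j]] MB by (intro mult_left_mono) auto
  finally show ?thesis .
qed

lemma W_offer_cdf_le_above_L:
  assumes MA: "0 \<le> MA" and j: "j \<in> {1..n}"
    and p_le: "MA * (A.p j - c) \<le> MB * (B.p j - c)"
    and F_le: "\<And>x. B.U j < x \<Longrightarrow> x \<le> v \<Longrightarrow> MA * Wfun l m (A.F x) \<le> MB * Wfun l m (B.F x)"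
    and x: "B.L j \<le> x" "x \<le> v"
  shows "MA * Wfun l m (A.F x) \<le> MB * Wfun l m (B.F x)"
  using W_offer_cdf_le_of_p_le[OF MA j p_le x(1)] F_le[OF _ x(2)] by (cases "x \<le> B.U j") auto

text \<open>Induction along the chain of intervals: a pointwise domination of the weighted winning
  probabilities \<open>W (\<Gamma> k)\<close>, \<open>k \<le> j\<close>, propagates to the equilibrium payoffs and to \<open>W \<circ> F\<close>.\<close>
lemma comparison:
  assumes MA: "0 \<le> MA" and MB: "0 \<le> MB" and "1 \<le> j" "j \<le> n"
    and "\<And>k. 1 \<le> k \<Longrightarrow> k \<le> j \<Longrightarrow> MA * Wfun l m (A.\<Gamma> k) \<le> MB * Wfun l m (B.\<Gamma> k)"
  shows "MA * (A.p j - c) \<le> MB * (B.p j - c)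
    \<and> (\<forall>x. B.L j \<le> x \<longrightarrow> x \<le> v \<longrightarrow> MA * Wfun l m (A.F x) \<le> MB * Wfun l m (B.F x))"
  using assms(3-5)
proof (induction j rule: nat_induct_at_least)
  case base
  have j: "1 \<in> {1..n}" using base by simp
  have above: "\<And>x. B.U 1 < x \<Longrightarrow> x \<le> v \<Longrightarrow> MA * Wfun l m (A.F x) \<le> MB * Wfun l m (B.F x)"
    by simp
  have "MA * (A.p 1 - c) \<le> MB * (B.p 1 - c)"
    using p_le_of_W_le[OF MA MB j _ above] base by simp
  then show ?case using W_offer_cdf_le_above_L[OF MA j _ above] by blast
next
  case (Suc j)
  have j: "Suc j \<in> {1..n}" using Suc by simp
  have above: "\<And>x. B.U (Suc j) < x \<Longrightarrow> x \<le> v \<Longrightarrow> MA * Wfun l m (A.F x) \<le> MB * Wfun l m (B.F x)"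
    using Suc B.U_Suc[of j] by simp
  have "MA * (A.p (Suc j) - c) \<le> MB * (B.p (Suc j) - c)"
    using p_le_of_W_le[OF MA MB j _ above] Suc.prems by simp
  then show ?case using W_offer_cdf_le_above_L[OF MA j _ above] by blast
qed

end

locale selection_family = oligopoly_prices +
  fixes d :: nat and M :: "nat \<Rightarrow> real" and q :: "nat \<Rightarrow> real" and t :: "nat \<Rightarrow> nat \<Rightarrow> real"
  assumes d_pos: "1 \<le> d"
    and M_pos: "\<forall>s\<in>{1..d}. 0 < M s"
    and M_antimono: "\<forall>s\<in>{1..d}. \<forall>s'\<in>{1..d}. s \<le> s' \<longrightarrow> M s' \<le> M s"
    and q_pos: "\<forall>k\<in>{1..n}. 0 < q k"
    and q_sum: "(\<Sum>k=1..n. q k) < 1"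
    and t_family: "\<forall>j\<in>{1..n}.
        (\<forall>s\<in>{1..d}. t s j \<ge> 0) \<and> (\<Sum>s=1..d. t s j) = 1 \<and>
        (\<exists>dj\<in>{1..d}.
           (\<forall>s\<in>{1..d}. s \<le> dj \<longrightarrow> t s j > 0) \<and>
           (\<forall>s\<in>{1..d}. dj < s \<longrightarrow> t s j = 0) \<and>
           (\<forall>s\<in>{1..dj}. M s * Wfun l m (\<Sum>k=j..n. t s k * q k)
                        = M 1 * Wfun l m (\<Sum>k=j..n. t 1 k * q k)) \<and>
           (\<forall>s. dj \<le> s \<and> s < d \<longrightarrow>
                M (Suc s) * Wfun l m (\<Sum>k=j..n. t (Suc s) k * q k)
                \<le> M s * Wfun l m (\<Sum>k=j..n. t s k * q k)))"
begin

definition \<alpha> :: "nat \<Rightarrow> nat \<Rightarrow> real" where "\<alpha> s k = q k * t s k"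

lemma M_nonneg: "s \<in> {1..d} \<Longrightarrow> 0 \<le> M s"
  using M_pos by (simp add: less_imp_le)

abbreviation p_of :: "nat \<Rightarrow> nat \<Rightarrow> real" where "p_of s \<equiv> ppr l m c v f g n (\<alpha> s)"
abbreviation L_of :: "nat \<Rightarrow> nat \<Rightarrow> real" where "L_of s \<equiv> Lpen l m c v f g n (\<alpha> s)"
abbreviation U_of :: "nat \<Rightarrow> nat \<Rightarrow> real" where "U_of s \<equiv> Upen l m c v f g n (\<alpha> s)"
abbreviation F_of :: "nat \<Rightarrow> real \<Rightarrow> real" where "F_of s \<equiv> offer_cdf l m c v f g n (\<alpha> s)"
abbreviation MW :: "nat \<Rightarrow> nat \<Rightarrow> real" where "MW s j \<equiv> M s * W (Gam n (\<alpha> s) j)"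

lemma t_family_at:
  assumes "j \<in> {1..n}"
  shows "(\<forall>s\<in>{1..d}. t s j \<ge> 0) \<and> (\<Sum>s=1..d. t s j) = 1 \<and>
        (\<exists>dj\<in>{1..d}.
           (\<forall>s\<in>{1..d}. s \<le> dj \<longrightarrow> t s j > 0) \<and>
           (\<forall>s\<in>{1..d}. dj < s \<longrightarrow> t s j = 0) \<and>
           (\<forall>s\<in>{1..dj}. MW s j = MW 1 j) \<and>
           (\<forall>s. dj \<le> s \<and> s < d \<longrightarrow> MW (Suc s) j \<le> MW s j))"
proof -
  have Gam_\<alpha>: "(\<Sum>k=j..n. t s k * q k) = Gam n (\<alpha> s) j" for s
    by (simp add: Gam_def \<alpha>_def mult.commute)
  from bspec[OF t_family assms, unfolded Gam_\<alpha>] show ?thesis .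
qed

lemma selection_threshold:
  assumes "j \<in> {1..n}"
  obtains dj where "dj \<in> {1..d}"
    and "\<And>s. s \<in> {1..d} \<Longrightarrow> s \<le> dj \<Longrightarrow> 0 < t s j"
    and "\<And>s. s \<in> {1..d} \<Longrightarrow> dj < s \<Longrightarrow> t s j = 0"
    and "\<And>s. s \<in> {1..dj} \<Longrightarrow> MW s j = MW 1 j"
    and "\<And>s. dj \<le> s \<Longrightarrow> s < d \<Longrightarrow> MW (Suc s) j \<le> MW s j"
proof -
  obtain dj where dj: "dj \<in> {1..d}"
    and pos: "\<forall>s\<in>{1..d}. s \<le> dj \<longrightarrow> t s j > 0" and zero: "\<forall>s\<in>{1..d}. dj < s \<longrightarrow> t s j = 0"
    and eq: "\<forall>s\<in>{1..dj}. MW s j = MW 1 j" and decr: "\<forall>s. dj \<le> s \<and> s < d \<longrightarrow> MW (Suc s) j \<le> MW s j"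
    using t_family_at[OF assms] by (elim bexE conjE) (rule that, assumption+)
  show thesis
    by (rule that[OF dj]) (use pos zero eq decr in blast)+
qed

lemma t_nonneg: "j \<in> {1..n} \<Longrightarrow> s \<in> {1..d} \<Longrightarrow> 0 \<le> t s j"
  using t_family_at by blast

lemma t_le_1:
  assumes j: "j \<in> {1..n}" and s: "s \<in> {1..d}"
  shows "t s j \<le> 1"
proof -
  have "t s j \<le> (\<Sum>s'=1..d. t s' j)"
    using s t_nonneg[OF j] by (intro member_le_sum) auto
  then show ?thesis using t_family_at[OF j] by simp
qed

lemma penalty_chain_\<alpha>: "s \<in> {1..d} \<Longrightarrow> penalty_chain l m c v f g n (\<alpha> s)"
proof unfold_locales
  assume s: "s \<in> {1..d}"
  show "\<forall>k\<in>{1..n}. 0 \<le> \<alpha> s k"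
    using q_pos t_nonneg s by (simp add: \<alpha>_def less_imp_le)
  have "(\<Sum>k=1..n. \<alpha> s k) \<le> (\<Sum>k=1..n. q k)"
    unfolding \<alpha>_def using q_pos t_le_1 s by (intro sum_mono) (simp add: mult_left_le less_imp_le)
  then show "(\<Sum>k=1..n. \<alpha> s k) < 1" using q_sum by simp
qed

lemma penalty_chain_pair_\<alpha>:
  "s \<in> {1..d} \<Longrightarrow> s' \<in> {1..d} \<Longrightarrow> penalty_chain_pair l m c v f g n (\<alpha> s) (\<alpha> s')"
  unfolding penalty_chain_pair_def using penalty_chain_\<alpha> by blast

lemma MW_le_MW_1:
  assumes j: "j \<in> {1..n}" and s: "s \<in> {1..d}"
  shows "MW s j \<le> MW 1 j"
proof -
  obtain dj where dj: "dj \<in> {1..d}" "\<And>s. s \<in> {1..dj} \<Longrightarrow> MW s j = MW 1 j"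
    and decr: "\<And>s. dj \<le> s \<Longrightarrow> s < d \<Longrightarrow> MW (Suc s) j \<le> MW s j"
    by (rule selection_threshold[OF j]) blast
  have le_dj: "MW s' j \<le> MW dj j" if "dj \<le> s'" "s' \<le> d" for s'
    using that
  proof (induction s' rule: dec_induct)
    case (step k)
    have "MW (Suc k) j \<le> MW k j" using decr[of k] step by simp
    moreover have "MW k j \<le> MW dj j" using step by simp
    ultimately show ?case by linarith
  qed simp
  show ?thesis
  proof (cases "s \<le> dj")
    case True
    then show ?thesis using dj(2)[of s] s by simp
  next
    case False
    then show ?thesis using le_dj[of s] dj(2)[of dj] dj(1) s by simp
  qed
qed

lemma MW_eq_MW_1:
  assumes j: "j \<in> {1..n}" and s: "s \<in> {1..d}" and "0 < t s j"
  shows "MW s j = MW 1 j"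
proof -
  obtain dj where zero: "\<And>s. s \<in> {1..d} \<Longrightarrow> dj < s \<Longrightarrow> t s j = 0"
    and eq: "\<And>s. s \<in> {1..dj} \<Longrightarrow> MW s j = MW 1 j"
    by (rule selection_threshold[OF j]) blast
  have "s \<le> dj" using zero[OF s] \<open>0 < t s j\<close> by force
  then show ?thesis using eq[of s] s by simp
qed

text \<open>If \<open>t s k = 0\<close>, then \<open>\<Gamma>\<close> for \<open>s\<close> is the same at \<open>k\<close> and \<open>k + 1\<close>, so the equalisation at
  \<open>k + 1\<close> and the bound at \<open>k\<close> would contradict the strict growth of \<open>W (\<Gamma> k)\<close> for \<open>s = 1\<close>.\<close>
lemma t_pos_of_t_pos_Suc:
  assumes k: "k \<in> {1..n}" "Suc k \<le> n" and s: "s \<in> {1..d}" and "0 < t s (Suc k)"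
  shows "0 < t s k"
proof (rule ccontr)
  assume "\<not> 0 < t s k"
  then have "Gam n (\<alpha> s) k = Gam n (\<alpha> s) (Suc k)"
    using t_nonneg[OF k(1) s] k(1) by (simp add: Gam_def \<alpha>_def sum.atLeast_Suc_atMost)
  then have "MW 1 (Suc k) \<le> MW 1 k"
    using MW_eq_MW_1[of "Suc k" s] MW_le_MW_1[OF k(1) s] assms by simp
  then have le: "W (Gam n (\<alpha> 1) (Suc k)) \<le> W (Gam n (\<alpha> 1) k)"
    using M_pos d_pos by simp
  interpret C: penalty_chain l m c v f g n "\<alpha> 1" using penalty_chain_\<alpha> d_pos by simp
  obtain dj where "dj \<in> {1..d}" "\<And>s. s \<in> {1..d} \<Longrightarrow> s \<le> dj \<Longrightarrow> 0 < t s k"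
    by (rule selection_threshold[OF k(1)]) blast
  then have "0 < \<alpha> 1 k" using q_pos k by (simp add: \<alpha>_def)
  then have "W (Gam n (\<alpha> 1) k) < W (Gam n (\<alpha> 1) (Suc k))"
    using C.Gam_nonneg[of "Suc k"] C.Gam_less_1[of k] C.Gam_Suc[OF k(1)] k
    by (intro W_strict_antimono) auto
  then show False using le by simp
qed

lemma MW_eq_MW_1_below:
  assumes j: "j \<in> {1..n}" and s: "s \<in> {1..d}" and "0 < t s j" and k: "1 \<le> k" "k \<le> j"
  shows "MW s k = MW 1 k"
proof -
  have "0 < t s k"
    using k(2,1)
  proof (induction k rule: inc_induct)
    case (step k)
    then show ?case using t_pos_of_t_pos_Suc[of k s] j s by auto
  qed (use assms in simp)
  then show ?thesis using MW_eq_MW_1[of k s] j s k by simp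
qed

definition eq_payoff :: "nat \<Rightarrow> real" where "eq_payoff j = M 1 * (p_of 1 j - c)"

lemma eq_payoff_pos: "j \<in> {1..n} \<Longrightarrow> 0 < eq_payoff j"
  using penalty_chain.c_less_p[OF penalty_chain_\<alpha>] M_pos d_pos by (simp add: eq_payoff_def)

lemma eq_payoff_eq:
  assumes j: "j \<in> {1..n}" and s: "s \<in> {1..d}" and ts: "0 < t s j"
  shows "M s * (p_of s j - c) = eq_payoff j"
proof -
  have MW_eq: "MW s k = MW 1 k" if "1 \<le> k" "k \<le> j" for k
    using MW_eq_MW_1_below[OF j s ts that] .
  have 1: "1 \<in> {1..d}" using d_pos by simp
  have "M s * (p_of s j - c) \<le> M 1 * (p_of 1 j - c) \<and> (\<forall>x. L_of 1 j \<le> x \<longrightarrow> x \<le> v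
      \<longrightarrow> M s * W (F_of s x) \<le> M 1 * W (F_of 1 x))"
    by (rule penalty_chain_pair.comparison[OF penalty_chain_pair_\<alpha>[OF s 1]])
       (use M_nonneg s 1 j MW_eq in auto)
  moreover have "M 1 * (p_of 1 j - c) \<le> M s * (p_of s j - c) \<and> (\<forall>x. L_of s j \<le> x \<longrightarrow> x \<le> v
      \<longrightarrow> M 1 * W (F_of 1 x) \<le> M s * W (F_of s x))"
    by (rule penalty_chain_pair.comparison[OF penalty_chain_pair_\<alpha>[OF 1 s]])
       (use M_nonneg s 1 j MW_eq in auto)
  ultimately show ?thesis unfolding eq_payoff_def by simp
qed

lemma MW_offer_cdf_le:
  assumes s: "s \<in> {1..d}" and n: "1 \<le> n" and x: "x \<le> v"
  shows "M s * W (F_of s x) \<le> M 1 * W (F_of 1 x)"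
proof (cases "L_of 1 n \<le> x")
  case True
  have 1: "1 \<in> {1..d}" using d_pos by simp
  have "M s * (p_of s n - c) \<le> M 1 * (p_of 1 n - c) \<and> (\<forall>x. L_of 1 n \<le> x \<longrightarrow> x \<le> v
      \<longrightarrow> M s * W (F_of s x) \<le> M 1 * W (F_of 1 x))"
    by (rule penalty_chain_pair.comparison[OF penalty_chain_pair_\<alpha>[OF s 1]])
       (use M_nonneg s 1 n MW_le_MW_1 in auto)
  then show ?thesis using True x by blast
next
  case False
  interpret A: penalty_chain l m c v f g n "\<alpha> s" by (rule penalty_chain_\<alpha>[OF s])
  interpret B: penalty_chain l m c v f g n "\<alpha> 1" using penalty_chain_\<alpha> d_pos by simp
  have "M s * W (F_of s x) \<le> M s"
    using A.offer_cdf_range[OF n x] W_le_1 M_pos s by (simp add: mult_left_le)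
  also have "\<dots> \<le> M 1" using M_antimono s d_pos by auto
  finally show ?thesis using B.offer_cdf_below[OF n] False by simp
qed

lemma node_payoff_bound:
  assumes s: "s \<in> {1..d}" and j: "j \<in> {1..n}" and x: "x \<le> v" and cx: "c \<le> f j x"
  shows "M s * ((f j x - c) * W (F_of s x)) \<le> eq_payoff j"
proof -
  interpret B: penalty_chain l m c v f g n "\<alpha> 1" using penalty_chain_\<alpha> d_pos by simp
  have "M s * ((f j x - c) * W (F_of s x)) = (f j x - c) * (M s * W (F_of s x))"
    by (simp add: mult_ac)
  also have "\<dots> \<le> (f j x - c) * (M 1 * W (F_of 1 x))"
    using MW_offer_cdf_le[OF s _ x] j cx by (intro mult_left_mono) auto
  also have "\<dots> = M 1 * ((f j x - c) * W (F_of 1 x))"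
    by (simp add: mult_ac)
  also have "\<dots> \<le> eq_payoff j"
    unfolding eq_payoff_def using B.deviation_bound[OF j x] M_nonneg d_pos by (intro mult_left_mono) auto
  finally show ?thesis .
qed

end

section \<open>Probabilistic preliminaries\<close>

lemma PiE_hit_pattern_iff:
  assumes "B \<subseteq> S" "J \<subseteq> K"
  shows "ys \<in> PiE K (\<lambda>k. if k \<in> J then B else S - B) \<longleftrightarrow> ys \<in> PiE K (\<lambda>_. S) \<and> {k\<in>K. ys k \<in> B} = J"
  using assms by (auto simp: PiE_iff split: if_splits)

lemma (in prob_space) measure_PiM_hit_pattern:
  assumes K: "finite K" and B: "B \<in> sets M" and J: "J \<subseteq> K"
  shows "measure (PiM K (\<lambda>_. M)) (PiE K (\<lambda>k. if k \<in> J then B else space M - B))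
    = prob B ^ card J * (1 - prob B) ^ (card K - card J)"
proof -
  interpret P: finite_product_prob_space "\<lambda>_. M" K
    by unfold_locales (simp_all add: K)
  have "emeasure (PiM K (\<lambda>_. M)) (PiE K (\<lambda>k. if k \<in> J then B else space M - B))
      = (\<Prod>k\<in>K. emeasure M (if k \<in> J then B else space M - B))"
    using B by (intro P.measure_times) auto
  also have "\<dots> = (\<Prod>k\<in>K. ennreal (if k \<in> J then prob B else 1 - prob B))"
    using B by (intro prod.cong refl) (auto simp: emeasure_eq_measure prob_compl)
  also have "\<dots> = ennreal (\<Prod>k\<in>K. if k \<in> J then prob B else 1 - prob B)"
    by (rule prod_ennreal) auto
  moreover have "0 \<le> (\<Prod>k\<in>K. if k \<in> J then prob B else 1 - prob B)"
    by (intro prod_nonneg) auto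
  ultimately have "measure (PiM K (\<lambda>_. M)) (PiE K (\<lambda>k. if k \<in> J then B else space M - B))
      = (\<Prod>k\<in>K. if k \<in> J then prob B else 1 - prob B)"
    by (simp add: measure_def)
  also have "\<dots> = prob B ^ card J * (1 - prob B) ^ (card K - card J)"
    using J K by (simp add: prod.If_cases Int_absorb1 Diff_eq[symmetric] card_Diff_subset finite_subset)
  finally show ?thesis .
qed

lemma sum_subsets_card_less:
  assumes K: "finite K"
  shows "(\<Sum>J\<in>{J. J \<subseteq> K \<and> card J < m}. p ^ card J * (1 - p) ^ (card K - card J))
    = binomial_lower_tail (card K) m p"
proof -
  have finite_S: "finite {J. J \<subseteq> K \<and> card J < m}"
    using K by (auto intro: finite_subset[of _ "Pow K"])
  have "(\<Sum>J\<in>{J. J \<subseteq> K \<and> card J < m}. p ^ card J * (1 - p) ^ (card K - card J))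
      = (\<Sum>i<m. \<Sum>J\<in>{J\<in>{J. J \<subseteq> K \<and> card J < m}. card J = i}. p ^ card J * (1 - p) ^ (card K - card J))"
    by (rule sum.group[symmetric]) (use finite_S in auto)
  also have "\<dots> = (\<Sum>i<m. real (card K choose i) * p ^ i * (1 - p) ^ (card K - i))"
  proof (intro sum.cong refl)
    fix i assume "i \<in> {..<m}"
    then have "{J\<in>{J. J \<subseteq> K \<and> card J < m}. card J = i} = {J. J \<subseteq> K \<and> card J = i}" by auto
    then show "(\<Sum>J\<in>{J\<in>{J. J \<subseteq> K \<and> card J < m}. card J = i}. p ^ card J * (1 - p) ^ (card K - card J))
        = real (card K choose i) * p ^ i * (1 - p) ^ (card K - i)"
      by (simp add: n_subsets[OF K])
  qed
  finally show ?thesis by (simp add: binomial_lower_tail_def)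
qed

lemma count_less_eq_UN_hit_patterns:
  assumes B: "B \<subseteq> space M"
  shows "{ys \<in> space (PiM K (\<lambda>_. M)). card {k\<in>K. ys k \<in> B} < m}
    = (\<Union>J\<in>{J. J \<subseteq> K \<and> card J < m}. PiE K (\<lambda>k. if k \<in> J then B else space M - B))"
proof (intro set_eqI iffI)
  fix ys assume "ys \<in> {ys \<in> space (PiM K (\<lambda>_. M)). card {k\<in>K. ys k \<in> B} < m}"
  then show "ys \<in> (\<Union>J\<in>{J. J \<subseteq> K \<and> card J < m}. PiE K (\<lambda>k. if k \<in> J then B else space M - B))"
    using PiE_hit_pattern_iff[OF B, of "{k\<in>K. ys k \<in> B}" K ys]
    by (intro UN_I[of "{k\<in>K. ys k \<in> B}"]) (auto simp: space_PiM)
qed (use PiE_hit_pattern_iff[OF B] in \<open>auto simp: space_PiM\<close>)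

lemma (in prob_space) measure_PiM_count_less:
  assumes K: "finite K" and B: "B \<in> sets M"
  shows "measure (PiM K (\<lambda>_. M)) {ys \<in> space (PiM K (\<lambda>_. M)). card {k\<in>K. ys k \<in> B} < m}
       = binomial_lower_tail (card K) m (prob B)"
proof -
  interpret P: finite_product_prob_space "\<lambda>_. M" K
    by unfold_locales (simp_all add: K)
  define E where "E J = PiE K (\<lambda>k. if k \<in> J then B else space M - B)" for J
  define S where "S = {J. J \<subseteq> K \<and> card J < m}"
  have B_space: "B \<subseteq> space M" using B by (rule sets.sets_into_space)
  have "disjoint_family_on E S"
    unfolding disjoint_family_on_def
  proof (intro ballI impI)
    fix J J' assume "J \<in> S" "J' \<in> S" "J \<noteq> J'"
    then show "E J \<inter> E J' = {}"
      using PiE_hit_pattern_iff[OF B_space, of J K] PiE_hit_pattern_iff[OF B_space, of J' K]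
      by (auto simp: E_def S_def)
  qed
  moreover have "E ` S \<subseteq> sets (PiM K (\<lambda>_. M))"
    unfolding E_def using B by (auto intro!: sets_PiM_I_finite K)
  moreover have "finite S"
    using K by (auto simp: S_def intro: finite_subset[of _ "Pow K"])
  ultimately have "measure (PiM K (\<lambda>_. M)) (\<Union>J\<in>S. E J) = (\<Sum>J\<in>S. measure (PiM K (\<lambda>_. M)) (E J))"
    using P.finite_measure_finite_Union by simp
  also have "\<dots> = (\<Sum>J\<in>S. prob B ^ card J * (1 - prob B) ^ (card K - card J))"
    using measure_PiM_hit_pattern[OF K B] by (intro sum.cong refl) (auto simp: E_def S_def)
  finally show ?thesis
    using count_less_eq_UN_hit_patterns[OF B_space, of K m] sum_subsets_card_less[OF K]
    by (simp add: E_def S_def)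
qed

lemma measure_pmf_bind_cong:
  fixes P :: "'a pmf" and F G :: "'a \<Rightarrow> 'b measure"
  assumes eq: "\<And>s. s \<in> set_pmf P \<Longrightarrow> F s = G s"
    and sF: "\<And>s. sets (F s) = sets R" and sG: "\<And>s. sets (G s) = sets R"
  shows "measure_pmf P \<bind> F = measure_pmf P \<bind> G"
proof -
  define x0 where "x0 = (SOME x. x \<in> space (measure_pmf P))"
  have "subprob_algebra (F x0) = subprob_algebra (G x0)"
    using sF sG by (intro subprob_algebra_cong) simp
  moreover have "emeasure (measure_pmf P) (F -` A \<inter> space (measure_pmf P))
      = emeasure (measure_pmf P) (G -` A \<inter> space (measure_pmf P))" for A
  proof -
    have "(F -` A) \<inter> set_pmf P = (G -` A) \<inter> set_pmf P" using eq by auto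
    then show ?thesis by (metis emeasure_Int_set_pmf inf_top.right_neutral space_measure_pmf)
  qed
  ultimately have "distr (measure_pmf P) (subprob_algebra (F x0)) F
      = distr (measure_pmf P) (subprob_algebra (G x0)) G"
    unfolding distr_def by simp
  then show ?thesis by (simp add: bind_nonempty x0_def)
qed

text \<open>Outside the support of \<open>P\<close> a kernel may be arbitrary (not even a subprobability); replacing
  it there by one of its values on the support makes the library's results on \<open>\<bind>\<close> applicable.\<close>
definition restrict_kernel :: "'a pmf \<Rightarrow> ('a \<Rightarrow> 'b measure) \<Rightarrow> 'a \<Rightarrow> 'b measure" where
  "restrict_kernel P F s = (if s \<in> set_pmf P then F s else F (SOME x. x \<in> set_pmf P))"

lemma measure_pmf_bind_restrict_kernel:
  "(\<And>s. sets (F s) = sets R) \<Longrightarrow> measure_pmf P \<bind> F = measure_pmf P \<bind> restrict_kernel P F"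
  by (rule measure_pmf_bind_cong[where R=R]) (auto simp: restrict_kernel_def)

lemma restrict_kernel_measurable:
  assumes "\<And>s. s \<in> set_pmf P \<Longrightarrow> F s \<in> space (subprob_algebra R)"
  shows "restrict_kernel P F \<in> measurable (measure_pmf P) (subprob_algebra R)"
proof -
  have "restrict_kernel P F s \<in> space (subprob_algebra R)" for s
    using assms set_pmf_not_empty[of P] some_in_eq[of "set_pmf P"] by (auto simp: restrict_kernel_def)
  then show ?thesis by (simp add: measurable_def)
qed

lemma emeasure_measure_pmf_bind:
  assumes F: "\<And>s. s \<in> set_pmf P \<Longrightarrow> F s \<in> space (subprob_algebra R)"
    and sets_F: "\<And>s. sets (F s) = sets R" and X: "X \<in> sets R"
  shows "emeasure (measure_pmf P \<bind> F) X = (\<integral>\<^sup>+s. emeasure (F s) X \<partial>measure_pmf P)"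
proof -
  have "emeasure (measure_pmf P \<bind> F) X = emeasure (measure_pmf P \<bind> restrict_kernel P F) X"
    using measure_pmf_bind_restrict_kernel[of F R P] sets_F by simp
  also have "\<dots> = (\<integral>\<^sup>+s. emeasure (restrict_kernel P F s) X \<partial>measure_pmf P)"
    by (rule emeasure_bind[OF _ restrict_kernel_measurable[OF F] X]) simp
  also have "\<dots> = (\<integral>\<^sup>+s. emeasure (F s) X \<partial>measure_pmf P)"
    by (intro nn_integral_cong_AE) (auto simp: AE_measure_pmf_iff restrict_kernel_def)
  finally show ?thesis .
qed

lemma prob_space_measure_pmf_bind:
  assumes F: "\<And>s. s \<in> set_pmf P \<Longrightarrow> prob_space (F s)" and sets_F: "\<And>s. sets (F s) = sets R"
  shows "prob_space (measure_pmf P \<bind> F)"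
proof -
  have "\<And>s. s \<in> set_pmf P \<Longrightarrow> F s \<in> space (subprob_algebra R)"
    using F sets_F by (auto simp: space_subprob_algebra prob_space_imp_subprob_space)
  then have "prob_space (measure_pmf P \<bind> restrict_kernel P F)"
    using F by (intro prob_space.prob_space_bind[OF prob_space_measure_pmf _ restrict_kernel_measurable])
      (auto simp: AE_measure_pmf_iff restrict_kernel_def)
  moreover have "measure_pmf P \<bind> F = measure_pmf P \<bind> restrict_kernel P F"
    by (rule measure_pmf_bind_restrict_kernel) (rule sets_F)
  ultimately show ?thesis by simp
qed

lemma AE_measure_pmf_bind:
  assumes F: "\<And>s. s \<in> set_pmf P \<Longrightarrow> F s \<in> space (subprob_algebra R)"
    and sets_F: "\<And>s. sets (F s) = sets R" and Q: "Measurable.pred R Q"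
    and AE: "\<And>s. s \<in> set_pmf P \<Longrightarrow> AE x in F s. Q x"
  shows "AE x in measure_pmf P \<bind> F. Q x"
proof -
  have "AE x in restrict_kernel P F s. Q x" if "s \<in> set_pmf P" for s
    unfolding restrict_kernel_def using AE[OF that] that by simp
  then have "AE x in measure_pmf P \<bind> restrict_kernel P F. Q x"
    by (subst AE_bind[OF restrict_kernel_measurable[OF F] Q]) (auto simp: AE_measure_pmf_iff)
  moreover have "measure_pmf P \<bind> F = measure_pmf P \<bind> restrict_kernel P F"
    by (rule measure_pmf_bind_restrict_kernel) (rule sets_F)
  ultimately show ?thesis by (simp only:)
qed

lemma space_actM: "space (actM :: ('v::finite) action measure) = UNIV"
  by (simp add: actM_def space_pair_measure space_PiM)

lemma measurable_card_Collect:
  assumes "finite K" and "\<And>k. k \<in> K \<Longrightarrow> Measurable.pred M (P k)"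
  shows "(\<lambda>\<omega>. real (card {k\<in>K. P k \<omega>})) \<in> borel_measurable M"
proof -
  have "(\<lambda>\<omega>. \<Sum>k\<in>K. if P k \<omega> then 1 else 0 :: real) \<in> borel_measurable M"
    using assms(2) by (intro borel_measurable_sum) measurable
  then show ?thesis using assms(1) by (simp add: sum.If_cases Int_def)
qed

lemma win_prob_measurable:
  assumes K: "finite K"
    and Y: "\<And>k. k \<in> K \<Longrightarrow> (\<lambda>\<omega>. Y \<omega> k) \<in> measurable M (actM :: ('v::finite) action measure)"
    and X[measurable]: "X \<in> borel_measurable M"
  shows "(\<lambda>\<omega>. win_prob m v K (Y \<omega>) u (X \<omega>)) \<in> borel_measurable M"
proof -
  have Yk[measurable]: "(\<lambda>\<omega>. Y \<omega> k) \<in> measurable M (count_space UNIV \<Otimes>\<^sub>M (\<Pi>\<^sub>M u\<in>UNIV. borel))"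
    if "k \<in> K" for k
    using Y[OF that] by (simp add: actM_def)
  define A where "A \<omega> = real (card {k\<in>K. u \<in> fst (Y \<omega> k) \<and> snd (Y \<omega> k) u \<le> v \<and> snd (Y \<omega> k) u < X \<omega>})"
    for \<omega>
  define T where "T \<omega> = real (card {k\<in>K. u \<in> fst (Y \<omega> k) \<and> snd (Y \<omega> k) u \<le> v \<and> snd (Y \<omega> k) u = X \<omega>})"
    for \<omega>
  have [measurable]: "A \<in> borel_measurable M"
    unfolding A_def by (rule measurable_card_Collect[OF K]) measurable
  have [measurable]: "T \<in> borel_measurable M"
    unfolding T_def by (rule measurable_card_Collect[OF K]) measurable
  have "win_prob m v K (Y \<omega>) u (X \<omega>)
      = (if X \<omega> \<le> v \<and> A \<omega> < real m then min 1 ((real m - A \<omega>) / (T \<omega> + 1)) else 0)" for \<omega>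
    unfolding win_prob_def Let_def A_def T_def by simp
  moreover have "(\<lambda>\<omega>. if X \<omega> \<le> v \<and> A \<omega> < real m then min 1 ((real m - A \<omega>) / (T \<omega> + 1)) else 0)
      \<in> borel_measurable M" by measurable
  ultimately show ?thesis by simp
qed

lemma win_prob_le:
  "win_prob m v K ys u x
    \<le> (if card {k\<in>K. u \<in> fst (ys k) \<and> snd (ys k) u \<le> v \<and> snd (ys k) u < x} < m then 1 else 0)"
  by (simp add: win_prob_def Let_def)

lemma le_win_prob:
  assumes "finite K" and "x \<le> v"
  shows "(if card {k\<in>K. u \<in> fst (ys k) \<and> snd (ys k) u \<le> v \<and> snd (ys k) u \<le> x} < m then 1 else 0)
      \<le> win_prob m v K ys u x"
proof -
  define A where "A = {k\<in>K. u \<in> fst (ys k) \<and> snd (ys k) u \<le> v \<and> snd (ys k) u < x}"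
  define T where "T = {k\<in>K. u \<in> fst (ys k) \<and> snd (ys k) u \<le> v \<and> snd (ys k) u = x}"
  have "{k\<in>K. u \<in> fst (ys k) \<and> snd (ys k) u \<le> v \<and> snd (ys k) u \<le> x} = A \<union> T"
    by (auto simp: A_def T_def)
  moreover have "card (A \<union> T) = card A + card T"
    using assms(1) by (intro card_Un_disjoint) (auto simp: A_def T_def)
  moreover have "win_prob m v K ys u x
      = (if card A < m then min 1 ((real m - real (card A)) / (real (card T) + 1)) else 0)"
    unfolding win_prob_def Let_def A_def T_def using assms(2) by simp
  moreover have "card A + card T < m \<Longrightarrow> 1 \<le> (real m - real (card A)) / (real (card T) + 1)"
    by (simp add: field_simps)
  ultimately show ?thesis by auto
qed

lemma win_prob_nonneg: "0 \<le> win_prob m v K ys u x"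
  by (simp add: win_prob_def Let_def)

lemma win_prob_le_1: "win_prob m v K ys u x \<le> 1"
  by (simp add: win_prob_def Let_def)

lemma win_prob_above_v: "v < x \<Longrightarrow> win_prob m v K ys u x = 0"
  by (simp add: win_prob_def Let_def)

section \<open>The equilibrium profile\<close>

locale spectrum_equilibrium =
  selection_family l m c v f g n d "\<lambda>s. real (card (I s))" "pmf Q" t
  for l m :: nat and c v :: real and f g :: "nat \<Rightarrow> real \<Rightarrow> real" and n d :: nat
    and I :: "nat \<Rightarrow> 'v::finite set" and Q :: "nat pmf" and t :: "nat \<Rightarrow> nat \<Rightarrow> real" +
  fixes E :: "'v \<Rightarrow> 'v \<Rightarrow> bool"
  assumes mean_valid: "mean_valid E d I" and Q_support: "set_pmf Q \<subseteq> {..n}"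
begin

abbreviation strategy :: "nat \<Rightarrow> 'v action measure" where
  "strategy \<equiv> eq_strategy l m c v f g n Q d I t"

abbreviation \<phi>_of :: "nat \<Rightarrow> nat \<Rightarrow> real \<Rightarrow> real" where
  "\<phi>_of s \<equiv> phi l m c v f g n (\<alpha> s)"

abbreviation penalties :: "nat \<Rightarrow> nat \<Rightarrow> ('v \<Rightarrow> real) measure" where
  "penalties s j \<equiv> pen_law l m c v f g n Q t (I s) s j"

abbreviation offer_law :: "nat \<Rightarrow> nat \<Rightarrow> 'v action measure" where
  "offer_law s j \<equiv> distr (penalties s j) actM (\<lambda>x. (I s, x))"

definition set_choice :: "nat \<Rightarrow> nat pmf" where
  "set_choice j = embed_pmf (\<lambda>s. if s \<in> {1..d} then t s j else 0)"

lemma strategy_eq: "strategy j = measure_pmf (set_choice j) \<bind> (\<lambda>s. offer_law s j)"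
  unfolding eq_strategy_def set_choice_def ..

lemma penalties_eq:
  "penalties s j = (\<Pi>\<^sub>M u\<in>UNIV. if u \<in> I s then interval_measure (\<phi>_of s j) else return borel 0)"
proof -
  have "(\<lambda>k. pmf Q k * t s k) = \<alpha> s" by (simp add: fun_eq_iff \<alpha>_def)
  then show ?thesis unfolding pen_law_def by (simp only:)
qed

lemma node_in_some_set: "\<exists>s\<in>{1..d}. u \<in> I s"
  using mean_valid unfolding mean_valid_def by blast

lemma node_set_unique: "s \<in> {1..d} \<Longrightarrow> s' \<in> {1..d} \<Longrightarrow> u \<in> I s \<Longrightarrow> u \<in> I s' \<Longrightarrow> s = s'"
  using mean_valid unfolding mean_valid_def by blast

lemma indep_set_I: "s \<in> {1..d} \<Longrightarrow> indep_set E (I s)"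
  using mean_valid unfolding mean_valid_def maximal_indep_set_def by auto

lemma pmf_set_choice:
  assumes j: "j \<in> {1..n}"
  shows "pmf (set_choice j) s = (if s \<in> {1..d} then t s j else 0)"
proof -
  have "(\<integral>\<^sup>+s. ennreal (if s \<in> {1..d} then t s j else 0) \<partial>count_space UNIV)
      = (\<Sum>s\<in>{1..d}. ennreal (if s \<in> {1..d} then t s j else 0))"
    by (rule nn_integral_count_space') auto
  also have "\<dots> = ennreal (\<Sum>s\<in>{1..d}. t s j)"
    using t_nonneg[OF j] by (subst sum_ennreal) auto
  also have "\<dots> = 1"
    using t_family_at[OF j] by simp
  finally have "(\<integral>\<^sup>+s. ennreal (if s \<in> {1..d} then t s j else 0) \<partial>count_space UNIV) = 1" .
  then show ?thesis
    unfolding set_choice_def by (rule pmf_embed_pmf[rotated]) (use t_nonneg[OF j] in auto)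
qed

lemma set_pmf_set_choice: "j \<in> {1..n} \<Longrightarrow> s \<in> set_pmf (set_choice j) \<Longrightarrow> s \<in> {1..d} \<and> 0 < t s j"
  using pmf_set_choice[of j s] t_nonneg[of j s] by (auto simp: set_pmf_eq split: if_splits)

lemma \<alpha>_pos: "j \<in> {1..n} \<Longrightarrow> 0 < t s j \<Longrightarrow> 0 < \<alpha> s j"
  using q_pos by (simp add: \<alpha>_def)

lemma \<phi>_of_distribution:
  assumes j: "j \<in> {1..n}" and s: "s \<in> {1..d}" and ts: "0 < t s j"
  shows "real_distribution (interval_measure (\<phi>_of s j))"
    and "emeasure (interval_measure (\<phi>_of s j)) {..x} = \<phi>_of s j x"
    and "measure (interval_measure (\<phi>_of s j)) {..x} = \<phi>_of s j x"
  using penalty_chain.phi_distribution[OF penalty_chain_\<alpha>[OF s] j \<alpha>_pos[OF j ts]] by auto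

lemma prob_space_penalty:
  assumes "j \<in> {1..n}" "s \<in> {1..d}" "0 < t s j"
  shows "prob_space (if u \<in> I s then interval_measure (\<phi>_of s j) else return borel (0::real))"
  using \<phi>_of_distribution(1)[OF assms] by (auto simp: real_distribution_def prob_space_return)

lemma prob_space_penalties: "j \<in> {1..n} \<Longrightarrow> s \<in> {1..d} \<Longrightarrow> 0 < t s j \<Longrightarrow> prob_space (penalties s j)"
  unfolding penalties_eq by (intro prob_space_PiM prob_space_penalty)

lemma measurable_Pair_I: "(\<lambda>x. (I s, x)) \<in> measurable (penalties s j) actM"
proof -
  have "sets (penalties s j) = sets (\<Pi>\<^sub>M u\<in>(UNIV::'v set). (borel :: real measure))"
    unfolding penalties_eq by (rule sets_PiM_cong) auto
  moreover have "(\<lambda>x. (I s, x)) \<in> measurable (\<Pi>\<^sub>M u\<in>(UNIV::'v set). (borel :: real measure)) actM"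
    unfolding actM_def by measurable
  ultimately show ?thesis by (simp cong: measurable_cong_sets)
qed

lemma sets_strategy: "sets (strategy j) = sets actM"
  unfolding strategy_eq by (rule sets_bind) auto

lemma prob_space_offer_law: "j \<in> {1..n} \<Longrightarrow> s \<in> set_pmf (set_choice j) \<Longrightarrow> prob_space (offer_law s j)"
  using set_pmf_set_choice[of j s]
  by (intro prob_space.prob_space_distr[OF prob_space_penalties measurable_Pair_I]) auto

lemma offer_law_subprob:
  assumes "j \<in> {1..n}" "s \<in> set_pmf (set_choice j)"
  shows "offer_law s j \<in> space (subprob_algebra actM)"
  using prob_space_offer_law[OF assms] by (simp add: space_subprob_algebra prob_space_imp_subprob_space)

lemma prob_space_strategy: "j \<in> {1..n} \<Longrightarrow> prob_space (strategy j)"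
  unfolding strategy_eq by (rule prob_space_measure_pmf_bind[where R=actM]) (auto intro: prob_space_offer_law)

lemma product_prob_space_penalty:
  assumes "j \<in> {1..n}" "s \<in> {1..d}" "0 < t s j"
  shows "product_prob_space (\<lambda>u. if u \<in> I s then interval_measure (\<phi>_of s j) else return borel 0)"
  unfolding product_prob_space_def product_prob_space_axioms_def product_sigma_finite_def
  using prob_space_penalty[OF assms] by (auto simp: prob_space_imp_sigma_finite)

definition state_law :: "nat \<Rightarrow> 'v action measure" where
  "state_law k = (if k = 0 then return actM no_offer else strategy k)"

abbreviation opp_law :: "'v action measure" where
  "opp_law \<equiv> act_law Q strategy"

lemma opp_law_eq: "opp_law = measure_pmf Q \<bind> state_law"
  unfolding act_law_def state_law_def ..

lemma sets_state_law: "sets (state_law k) = sets actM"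
  by (simp add: state_law_def sets_strategy)

lemma sets_opp_law: "sets opp_law = sets actM"
  unfolding opp_law_eq by (rule sets_bind) (auto simp: sets_state_law)

lemma prob_space_state_law: "k \<in> set_pmf Q \<Longrightarrow> prob_space (state_law k)"
  using Q_support prob_space_strategy
  by (cases "k = 0") (auto simp: state_law_def prob_space_return space_actM)

lemma state_law_subprob: "k \<in> set_pmf Q \<Longrightarrow> state_law k \<in> space (subprob_algebra actM)"
  using prob_space_state_law sets_state_law by (simp add: space_subprob_algebra prob_space_imp_subprob_space)

lemma prob_space_opp_law: "prob_space opp_law"
  unfolding opp_law_eq
  by (rule prob_space_measure_pmf_bind[where R=actM]) (use prob_space_state_law sets_state_law in auto)

definition offer_le :: "'v \<Rightarrow> real \<Rightarrow> 'v action set" where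
  "offer_le u x = {a. u \<in> fst a \<and> snd a u \<le> v \<and> snd a u \<le> x}"

definition offer_less :: "'v \<Rightarrow> real \<Rightarrow> 'v action set" where
  "offer_less u x = {a. u \<in> fst a \<and> snd a u \<le> v \<and> snd a u < x}"

lemma offer_le_sets: "offer_le u x \<in> sets actM"
proof -
  have "Measurable.pred actM (\<lambda>a. u \<in> fst a \<and> snd a u \<le> v \<and> snd a u \<le> x)"
    unfolding actM_def by measurable
  then show ?thesis by (simp add: pred_def offer_le_def space_actM)
qed

lemma offer_less_sets: "offer_less u x \<in> sets actM"
proof -
  have "Measurable.pred actM (\<lambda>a. u \<in> fst a \<and> snd a u \<le> v \<and> snd a u < x)"
    unfolding actM_def by measurable
  then show ?thesis by (simp add: pred_def offer_less_def space_actM)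
qed

lemma emeasure_offer_law_offer_le:
  assumes j: "j \<in> {1..n}" and s: "s \<in> {1..d}" and ts: "0 < t s j"
  shows "emeasure (offer_law s j) (offer_le u x) = (if u \<in> I s then ennreal (\<phi>_of s j (min v x)) else 0)"
proof -
  interpret P: product_prob_space
    "\<lambda>u. if u \<in> I s then interval_measure (\<phi>_of s j) else return borel 0" UNIV
    by (rule product_prob_space_penalty[OF assms])
  have "emeasure (offer_law s j) (offer_le u x)
      = emeasure (penalties s j) ((\<lambda>y. (I s, y)) -` offer_le u x \<inter> space (penalties s j))"
    by (rule emeasure_distr[OF measurable_Pair_I offer_le_sets])
  also have "(\<lambda>y. (I s, y)) -` offer_le u x \<inter> space (penalties s j)
      = (if u \<in> I s then {y \<in> space (penalties s j). y u \<in> {..min v x}} else {})"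
    by (auto simp: offer_le_def)
  finally show ?thesis
    using P.emeasure_PiM_Collect_single[of u "{..min v x}"] \<phi>_of_distribution(2)[OF assms]
    by (simp add: penalties_eq)
qed

lemma \<phi>_of_nonneg: "j \<in> {1..n} \<Longrightarrow> s \<in> {1..d} \<Longrightarrow> 0 < t s j \<Longrightarrow> 0 \<le> \<phi>_of s j x"
  using \<phi>_of_distribution(3)[of j s x] measure_nonneg[of "interval_measure (\<phi>_of s j)" "{..x}"] by simp

lemma t_\<phi>_of_nonneg: "j \<in> {1..n} \<Longrightarrow> s \<in> {1..d} \<Longrightarrow> 0 \<le> t s j * \<phi>_of s j x"
  using \<phi>_of_nonneg[of j s x] t_nonneg[of j s] by (cases "t s j = 0") auto

lemma emeasure_strategy_offer_le:
  assumes j: "j \<in> {1..n}" and s0: "s0 \<in> {1..d}" and u: "u \<in> I s0"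
  shows "emeasure (strategy j) (offer_le u x) = ennreal (t s0 j * \<phi>_of s0 j (min v x))"
proof -
  have "emeasure (strategy j) (offer_le u x)
      = (\<integral>\<^sup>+s. emeasure (offer_law s j) (offer_le u x) \<partial>measure_pmf (set_choice j))"
    unfolding strategy_eq
    by (rule emeasure_measure_pmf_bind[OF offer_law_subprob[OF j] sets_distr offer_le_sets])
  also have "\<dots> = (\<Sum>s\<in>{1..d}. emeasure (offer_law s j) (offer_le u x) * pmf (set_choice j) s)"
    by (rule nn_integral_measure_pmf_support) (use set_pmf_set_choice[OF j] in auto)
  also have "\<dots> = (\<Sum>s\<in>{1..d}. if s = s0 then ennreal (t s0 j * \<phi>_of s0 j (min v x)) else 0)"
  proof (intro sum.cong refl)
    fix s assume s: "s \<in> {1..d}"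
    show "emeasure (offer_law s j) (offer_le u x) * pmf (set_choice j) s
        = (if s = s0 then ennreal (t s0 j * \<phi>_of s0 j (min v x)) else 0)"
    proof (cases "0 < t s j")
      case False
      then show ?thesis using t_nonneg[OF j s] pmf_set_choice[OF j, of s] s by auto
    next
      case True
      show ?thesis
      proof (cases "s = s0")
        case True
        then show ?thesis
          using emeasure_offer_law_offer_le[OF j s \<open>0 < t s j\<close>, of u x] u pmf_set_choice[OF j, of s] s
            \<open>0 < t s j\<close> \<phi>_of_nonneg[OF j s \<open>0 < t s j\<close>, of "min v x"]
          by (simp add: ennreal_mult' mult.commute)
      next
        case False
        then have "u \<notin> I s" using node_set_unique[OF s s0] u by auto
        then show ?thesis using emeasure_offer_law_offer_le[OF j s True, of u x] False by simp
      qed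
    qed
  qed
  also have "\<dots> = ennreal (t s0 j * \<phi>_of s0 j (min v x))" using s0 by simp
  finally show ?thesis .
qed

lemma offer_cdf_nonneg: "s \<in> {1..d} \<Longrightarrow> 0 \<le> F_of s x"
  unfolding offer_cdf_def using t_\<phi>_of_nonneg
  by (intro sum_nonneg) (auto simp: \<alpha>_def mult.assoc intro!: mult_nonneg_nonneg)

lemma emeasure_opp_law_offer_le:
  assumes s0: "s0 \<in> {1..d}" and u: "u \<in> I s0"
  shows "emeasure opp_law (offer_le u x) = F_of s0 (min v x)"
proof -
  have "emeasure opp_law (offer_le u x) = (\<integral>\<^sup>+k. emeasure (state_law k) (offer_le u x) \<partial>measure_pmf Q)"
    unfolding opp_law_eq
    by (rule emeasure_measure_pmf_bind[OF state_law_subprob sets_state_law offer_le_sets])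
  also have "\<dots> = (\<Sum>k\<in>{..n}. emeasure (state_law k) (offer_le u x) * pmf Q k)"
    by (rule nn_integral_measure_pmf_support) (use Q_support in auto)
  also have "{..n} = insert 0 {1..n}" by auto
  also have "(\<Sum>k\<in>insert 0 {1..n}. emeasure (state_law k) (offer_le u x) * pmf Q k)
      = (\<Sum>k\<in>{1..n}. emeasure (state_law k) (offer_le u x) * pmf Q k)"
  proof -
    have "emeasure (state_law 0) (offer_le u x) = indicator (offer_le u x) no_offer"
      unfolding state_law_def by (simp add: emeasure_return[OF offer_le_sets])
    also have "\<dots> = 0" by (simp add: offer_le_def no_offer_def)
    finally show ?thesis by (subst sum.insert) auto
  qed
  also have "\<dots> = (\<Sum>k\<in>{1..n}. ennreal (\<alpha> s0 k * \<phi>_of s0 k (min v x)))"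
  proof (intro sum.cong refl)
    fix k assume k: "k \<in> {1..n}"
    then show "emeasure (state_law k) (offer_le u x) * pmf Q k = ennreal (\<alpha> s0 k * \<phi>_of s0 k (min v x))"
      using emeasure_strategy_offer_le[OF k s0 u] t_\<phi>_of_nonneg[OF k s0]
      by (simp add: state_law_def ennreal_mult'[symmetric] \<alpha>_def mult_ac)
  qed
  also have "\<dots> = F_of s0 (min v x)"
    using t_\<phi>_of_nonneg s0
    by (subst sum_ennreal) (auto simp: offer_cdf_def \<alpha>_def mult.assoc intro!: mult_nonneg_nonneg)
  finally show ?thesis .
qed

lemma measure_opp_law_offer_le:
  "s0 \<in> {1..d} \<Longrightarrow> u \<in> I s0 \<Longrightarrow> measure opp_law (offer_le u x) = F_of s0 (min v x)"
  using emeasure_opp_law_offer_le[of s0 u x] offer_cdf_nonneg[of s0 "min v x"] by (simp add: measure_def)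

definition opponents :: "nat \<Rightarrow> nat set" where "opponents i = {..<l} - {i}"

definition opp_profile :: "nat \<Rightarrow> (nat \<Rightarrow> 'v action) measure" where
  "opp_profile i = PiM (opponents i) (\<lambda>_. opp_law)"

abbreviation win_exp :: "nat \<Rightarrow> 'v \<Rightarrow> real \<Rightarrow> real" where
  "win_exp i u x \<equiv> \<integral>ys. win_prob m v (opponents i) ys u x \<partial>opp_profile i"

lemma finite_opponents: "finite (opponents i)"
  by (simp add: opponents_def)

lemma prob_space_opp_profile: "prob_space (opp_profile i)"
  unfolding opp_profile_def by (rule prob_space_PiM) (rule prob_space_opp_law)

lemma exp_payoff_eq:
  "exp_payoff l m c v f Q (\<lambda>i. strategy) i j a = (\<integral>ys. real_payoff l m c v (f j) i a ys \<partial>opp_profile i)"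
  unfolding exp_payoff_def opp_profile_def opponents_def ..

lemma measurable_opponent:
  assumes "k \<in> opponents i"
  shows "(\<lambda>ys. ys k) \<in> measurable (opp_profile i) actM"
proof -
  have "(\<lambda>ys. ys k) \<in> measurable (opp_profile i) opp_law"
    unfolding opp_profile_def by (rule measurable_component_singleton[OF assms])
  then show ?thesis using sets_opp_law by (simp cong: measurable_cong_sets)
qed

lemma win_prob_measurable_opp_profile:
  "(\<lambda>ys. win_prob m v (opponents i) ys u x) \<in> borel_measurable (opp_profile i)"
proof -
  have "(\<lambda>ys. win_prob m v (opponents i) ((\<lambda>ys. ys) ys) u ((\<lambda>_. x) ys)) \<in> borel_measurable (opp_profile i)"
    by (rule win_prob_measurable[OF finite_opponents]) (auto intro: measurable_opponent)
  then show ?thesis by simp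
qed

lemma integrable_win_prob: "integrable (opp_profile i) (\<lambda>ys. win_prob m v (opponents i) ys u x)"
proof -
  interpret P: prob_space "opp_profile i" by (rule prob_space_opp_profile)
  show ?thesis
    by (intro P.integrable_const_bound[of _ 1] win_prob_measurable_opp_profile AE_I2)
       (simp add: abs_of_nonneg win_prob_nonneg win_prob_le_1)
qed

definition few_in :: "nat \<Rightarrow> 'v action set \<Rightarrow> (nat \<Rightarrow> 'v action) set" where
  "few_in i B = {ys \<in> space (opp_profile i). card {k\<in>opponents i. ys k \<in> B} < m}"

lemma few_in_sets:
  assumes B[measurable]: "B \<in> sets actM"
  shows "few_in i B \<in> sets (opp_profile i)"
proof -
  have "(\<lambda>ys. real (card {k\<in>opponents i. ys k \<in> B})) \<in> borel_measurable (opp_profile i)"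
  proof (rule measurable_card_Collect[OF finite_opponents])
    fix k assume "k \<in> opponents i"
    note measurable_opponent[OF this, measurable]
    show "Measurable.pred (opp_profile i) (\<lambda>ys. ys k \<in> B)" by measurable
  qed
  then have "Measurable.pred (opp_profile i) (\<lambda>ys. real (card {k\<in>opponents i. ys k \<in> B}) < real m)"
    by measurable
  then show ?thesis by (simp add: few_in_def pred_def)
qed

lemma measure_few_in:
  assumes "i < l" "B \<in> sets actM"
  shows "measure (opp_profile i) (few_in i B) = W (measure opp_law B)"
proof -
  have "measure (opp_profile i) (few_in i B) = binomial_lower_tail (card (opponents i)) m (measure opp_law B)"
    unfolding few_in_def opp_profile_def
    using assms(2) sets_opp_law
    by (intro prob_space.measure_PiM_count_less[OF prob_space_opp_law finite_opponents]) simp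
  then show ?thesis
    using assms(1) W_eq_binomial_lower_tail by (simp add: opponents_def)
qed

lemma integral_indicator_few_in:
  "B \<in> sets actM \<Longrightarrow> (\<integral>ys. indicator (few_in i B) ys \<partial>opp_profile i) = measure (opp_profile i) (few_in i B)"
  using few_in_sets[of B i] by (simp add: Int_absorb2 sets.sets_into_space)

lemma integrable_indicator_few_in:
  assumes "B \<in> sets actM"
  shows "integrable (opp_profile i) (indicator (few_in i B) :: _ \<Rightarrow> real)"
proof -
  interpret P: prob_space "opp_profile i" by (rule prob_space_opp_profile)
  show ?thesis
    using few_in_sets[OF assms] by (intro integrable_real_indicator) (auto simp: less_top[symmetric])
qed

lemma win_exp_le:
  assumes i: "i < l"
  shows "win_exp i u x \<le> W (measure opp_law (offer_less u x))"
proof -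
  have "win_exp i u x \<le> (\<integral>ys. indicator (few_in i (offer_less u x)) ys \<partial>opp_profile i)"
  proof (rule integral_mono[OF integrable_win_prob integrable_indicator_few_in[OF offer_less_sets]])
    fix ys assume "ys \<in> space (opp_profile i)"
    then show "win_prob m v (opponents i) ys u x \<le> indicator (few_in i (offer_less u x)) ys"
      using win_prob_le[of m v "opponents i" ys u x]
      by (auto simp: few_in_def offer_less_def indicator_def)
  qed
  then show ?thesis
    using integral_indicator_few_in[OF offer_less_sets] measure_few_in[OF i offer_less_sets] by simp
qed

lemma le_win_exp:
  assumes i: "i < l" and x: "x \<le> v"
  shows "W (measure opp_law (offer_le u x)) \<le> win_exp i u x"
proof -
  have "(\<integral>ys. indicator (few_in i (offer_le u x)) ys \<partial>opp_profile i) \<le> win_exp i u x"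
  proof (rule integral_mono[OF integrable_indicator_few_in[OF offer_le_sets] integrable_win_prob])
    fix ys assume "ys \<in> space (opp_profile i)"
    then show "indicator (few_in i (offer_le u x)) ys \<le> win_prob m v (opponents i) ys u x"
      using le_win_prob[OF finite_opponents[of i] x, where u=u and ys=ys and m=m]
      by (auto simp: few_in_def offer_le_def indicator_def)
  qed
  then show ?thesis
    using integral_indicator_few_in[OF offer_le_sets] measure_few_in[OF i offer_le_sets] by simp
qed

lemma win_exp_nonneg: "0 \<le> win_exp i u x"
  by (intro integral_nonneg_AE AE_I2) (rule win_prob_nonneg)

lemma win_exp_above_v: "v < x \<Longrightarrow> win_exp i u x = 0"
  by (simp add: win_prob_above_v)

text \<open>Compares the penalty \<open>x\<close> with any \<open>y < x\<close>; letting \<open>y\<close> tend to \<open>x\<close> from the left gives the node bound below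
  even at atoms of the opponents' penalty distribution.\<close>
lemma node_payoff_le_of_less:
  assumes i: "i < l" and j: "j \<in> {1..n}" and s0: "s0 \<in> {1..d}" and u: "u \<in> I s0"
    and x: "x \<le> v" "c < f j x" and y: "c < f j y" "y < x"
  shows "card (I s0) * ((f j x - c) * win_exp i u x) \<le> eq_payoff j * ((f j x - c) / (f j y - c))"
proof -
  interpret N: prob_space opp_law by (rule prob_space_opp_law)
  have "offer_le u y \<subseteq> offer_less u x" using y by (auto simp: offer_le_def offer_less_def)
  then have "measure opp_law (offer_le u y) \<le> measure opp_law (offer_less u x)"
    using offer_less_sets[of u x] sets_opp_law by (intro N.finite_measure_mono) auto
  then have "F_of s0 y \<le> measure opp_law (offer_less u x)"
    using measure_opp_law_offer_le[OF s0 u, of y] x y by (simp add: min_absorb2)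
  then have "W (measure opp_law (offer_less u x)) \<le> W (F_of s0 y)"
    using offer_cdf_nonneg[OF s0] by (intro W_antimono) auto
  then have "win_exp i u x \<le> W (F_of s0 y)"
    using win_exp_le[OF i, of u x] by linarith
  then have "card (I s0) * ((f j x - c) * win_exp i u x) \<le> card (I s0) * ((f j x - c) * W (F_of s0 y))"
    using x by (intro mult_left_mono) auto
  also have "\<dots> = (card (I s0) * ((f j y - c) * W (F_of s0 y))) * ((f j x - c) / (f j y - c))"
    using y by (simp add: field_simps)
  also have "\<dots> \<le> eq_payoff j * ((f j x - c) / (f j y - c))"
    using node_payoff_bound[OF s0 j, of y] x y by (intro mult_right_mono) auto
  finally show ?thesis .
qed

lemma node_payoff_le:
  assumes i: "i < l" and j: "j \<in> {1..n}" and s0: "s0 \<in> {1..d}" and u: "u \<in> I s0"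
  shows "card (I s0) * ((f j x - c) * win_exp i u x) \<le> eq_payoff j"
proof -
  consider "v < x" | "x \<le> v" "f j x \<le> c" | "x \<le> v" "c < f j x" by linarith
  then show ?thesis
  proof cases
    case 1
    then show ?thesis using win_exp_above_v eq_payoff_pos[OF j] by simp
  next
    case 2
    then have "(f j x - c) * win_exp i u x \<le> 0"
      using win_exp_nonneg by (intro mult_nonpos_nonneg) auto
    then have "card (I s0) * ((f j x - c) * win_exp i u x) \<le> 0"
      by (rule mult_nonneg_nonpos[rotated]) simp
    then show ?thesis using eq_payoff_pos[OF j] by simp
  next
    case 3
    have "(f j \<longlongrightarrow> f j x) (at x)"
      using isCont_f[OF j, of x] by (simp add: isCont_def)
    then have "(f j \<longlongrightarrow> f j x) (at_left x)"
      by (rule tendsto_mono[OF at_within_le_at])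
    then have "((\<lambda>y. eq_payoff j * ((f j x - c) / (f j y - c))) \<longlongrightarrow> eq_payoff j * ((f j x - c) / (f j x - c)))
        (at_left x)"
      using 3 by (intro tendsto_intros) auto
    then have lim: "((\<lambda>y. eq_payoff j * ((f j x - c) / (f j y - c))) \<longlongrightarrow> eq_payoff j) (at_left x)"
      using 3 by simp
    have "g j c < x" using g_c_less_iff[OF j] 3 by simp
    then have "eventually (\<lambda>y. card (I s0) * ((f j x - c) * win_exp i u x)
        \<le> eq_payoff j * ((f j x - c) / (f j y - c))) (at_left x)"
    proof (rule eventually_mono[OF eventually_at_left_real])
      fix y assume "y \<in> {g j c<..<x}"
      then show "card (I s0) * ((f j x - c) * win_exp i u x) \<le> eq_payoff j * ((f j x - c) / (f j y - c))"
        using node_payoff_le_of_less[OF i j s0 u 3] g_c_less_iff[OF j] by simp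
    qed
    then show ?thesis
      by (rule tendsto_le[OF trivial_limit_at_left_real lim tendsto_const])
  qed
qed

lemma node_payoff_ge:
  assumes i: "i < l" and j: "j \<in> {1..n}" and s0: "s0 \<in> {1..d}" and u: "u \<in> I s0"
    and x: "L_of s0 j \<le> x" "x \<le> U_of s0 j"
  shows "p_of s0 j - c \<le> (f j x - c) * win_exp i u x"
proof -
  interpret C: penalty_chain l m c v f g n "\<alpha> s0" by (rule penalty_chain_\<alpha>[OF s0])
  have xv: "x \<le> v" using x C.U_le_v[OF j] by simp
  have "p_of s0 j - c = (f j x - c) * W (F_of s0 x)" using C.indifference[OF j x] by simp
  also have "F_of s0 x = measure opp_law (offer_le u x)"
    using measure_opp_law_offer_le[OF s0 u, of x] xv by (simp add: min_absorb2)
  also have "(f j x - c) * W (measure opp_law (offer_le u x)) \<le> (f j x - c) * win_exp i u x"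
    using le_win_exp[OF i xv, of u] C.c_less_f[OF j x(1)] by (intro mult_left_mono) auto
  finally show ?thesis .
qed

abbreviation payoff :: "nat \<Rightarrow> nat \<Rightarrow> 'v action \<Rightarrow> real" where
  "payoff i j a \<equiv> exp_payoff l m c v f Q (\<lambda>i. strategy) i j a"

lemma payoff_eq_sum:
  "payoff i j a = (\<Sum>u\<in>fst a. (f j (snd a u) - c) * win_exp i u (snd a u))"
proof -
  have "payoff i j a
      = (\<integral>ys. (\<Sum>u\<in>fst a. (f j (snd a u) - c) * win_prob m v (opponents i) ys u (snd a u)) \<partial>opp_profile i)"
    unfolding exp_payoff_eq real_payoff_def opponents_def ..
  also have "\<dots> = (\<Sum>u\<in>fst a. (f j (snd a u) - c) * win_exp i u (snd a u))"
    by (subst Bochner_Integration.integral_sum) (auto intro: integrable_mult_right integrable_win_prob)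
  finally show ?thesis .
qed

lemma payoff_measurable:
  assumes j: "j \<in> {1..n}"
  shows "(\<lambda>a. payoff i j a) \<in> borel_measurable actM"
proof -
  interpret P: prob_space "opp_profile i" by (rule prob_space_opp_profile)
  have [measurable]: "f j \<in> borel_measurable borel"
    using isCont_f[OF j] by (intro borel_measurable_continuous_onI) (simp add: continuous_at_imp_continuous_on)
  have [measurable]: "Measurable.pred (actM \<Otimes>\<^sub>M opp_profile i) (\<lambda>\<omega>. u \<in> fst (fst \<omega>))"
    and [measurable]: "(\<lambda>\<omega>. snd (fst \<omega>) u) \<in> borel_measurable (actM \<Otimes>\<^sub>M opp_profile i)" for u :: 'v
  proof -
    have "Measurable.pred actM (\<lambda>a::'v action. u \<in> fst a)"
      and "(\<lambda>a::'v action. snd a u) \<in> borel_measurable actM"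
      unfolding actM_def by measurable
    then show "Measurable.pred (actM \<Otimes>\<^sub>M opp_profile i) (\<lambda>\<omega>. u \<in> fst (fst \<omega>))"
      and "(\<lambda>\<omega>. snd (fst \<omega>) u) \<in> borel_measurable (actM \<Otimes>\<^sub>M opp_profile i)"
      by measurable
  qed
  have [measurable]: "(\<lambda>\<omega>. win_prob m v (opponents i) (snd \<omega>) u (snd (fst \<omega>) u))
      \<in> borel_measurable (actM \<Otimes>\<^sub>M opp_profile i)" for u
  proof (rule win_prob_measurable[OF finite_opponents])
    fix k assume "k \<in> opponents i"
    note measurable_opponent[OF this, measurable]
    show "(\<lambda>\<omega>. snd \<omega> k) \<in> measurable (actM \<Otimes>\<^sub>M opp_profile i) actM" by measurable
  qed measurable
  have eq: "(\<lambda>(a, ys). real_payoff l m c v (f j) i a ys)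
      = (\<lambda>\<omega>. \<Sum>u\<in>UNIV. if u \<in> fst (fst \<omega>)
          then (f j (snd (fst \<omega>) u) - c) * win_prob m v (opponents i) (snd \<omega>) u (snd (fst \<omega>) u) else 0)"
    by (auto simp: fun_eq_iff real_payoff_def opponents_def sum.If_cases Int_def)
  have "(\<lambda>(a, ys). real_payoff l m c v (f j) i a ys) \<in> borel_measurable (actM \<Otimes>\<^sub>M opp_profile i)"
    unfolding eq by measurable
  then have "(\<lambda>a. \<integral>ys. real_payoff l m c v (f j) i a ys \<partial>opp_profile i) \<in> borel_measurable actM"
    by (rule P.borel_measurable_lebesgue_integral)
  then show ?thesis unfolding exp_payoff_eq .
qed

definition set_of :: "'v \<Rightarrow> nat" where
  "set_of u = (THE s. s \<in> {1..d} \<and> u \<in> I s)"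

lemma set_of_spec: "set_of u \<in> {1..d} \<and> u \<in> I (set_of u)"
  unfolding set_of_def using node_in_some_set[of u] node_set_unique[of _ _ u]
  by (rule_tac theI') blast

lemma set_of_eq: "s \<in> {1..d} \<Longrightarrow> u \<in> I s \<Longrightarrow> set_of u = s"
  using set_of_spec[of u] node_set_unique by blast

lemma sum_set_of:
  fixes h :: "nat \<Rightarrow> real"
  shows "(\<Sum>u\<in>S. h (set_of u)) = (\<Sum>s=1..d. card (S \<inter> I s) * h s)"
proof -
  have "S = (\<Union>s\<in>{1..d}. S \<inter> I s)" using node_in_some_set by blast
  then have "(\<Sum>u\<in>S. h (set_of u)) = (\<Sum>s=1..d. \<Sum>u\<in>S \<inter> I s. h (set_of u))"
    by (metis sum.UNION_disjoint[of "{1..d}" "\<lambda>s. S \<inter> I s"] finite_atLeastAtMost finite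
        Int_iff disjoint_iff node_set_unique)
  also have "\<dots> = (\<Sum>s=1..d. card (S \<inter> I s) * h s)"
    using set_of_eq by (intro sum.cong refl) simp
  finally show ?thesis .
qed

text \<open>Node \<open>u \<in> I s\<close> contributes at most \<open>eq_payoff j / card (I s)\<close>; the mean-valid
  inequality sums these contributions over an independent set to at most \<open>eq_payoff j\<close>.\<close>
lemma payoff_le:
  assumes i: "i < l" and j: "j \<in> {1..n}" and indep: "indep_set E (fst a)"
  shows "payoff i j a \<le> eq_payoff j"
proof -
  have "(f j (snd a u) - c) * win_exp i u (snd a u) \<le> eq_payoff j / card (I (set_of u))" for u
    using node_payoff_le[OF i j, of "set_of u" u "snd a u"] set_of_spec[of u] M_pos
    by (simp add: pos_le_divide_eq mult.commute)
  then have "payoff i j a \<le> (\<Sum>u\<in>fst a. eq_payoff j / card (I (set_of u)))"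
    unfolding payoff_eq_sum by (rule sum_mono)
  also have "\<dots> = eq_payoff j * (\<Sum>s=1..d. real (card (fst a \<inter> I s)) / real (card (I s)))"
    using sum_set_of[of "\<lambda>s. eq_payoff j / card (I s)" "fst a"] by (simp add: sum_distrib_left ac_simps)
  also have "\<dots> \<le> eq_payoff j"
    using mean_valid indep eq_payoff_pos[OF j] unfolding mean_valid_def
    by (simp add: mult_left_le)
  finally show ?thesis .
qed

lemma payoff_on_support:
  assumes i: "i < l" and j: "j \<in> {1..n}" and s: "s \<in> {1..d}" and ts: "0 < t s j"
    and x: "\<forall>u\<in>I s. L_of s j \<le> x u \<and> x u \<le> U_of s j"
  shows "payoff i j (I s, x) = eq_payoff j"
proof (rule antisym)
  show "payoff i j (I s, x) \<le> eq_payoff j"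
    using payoff_le[OF i j] indep_set_I[OF s] by simp
  have "eq_payoff j = (\<Sum>u\<in>I s. p_of s j - c)"
    using eq_payoff_eq[OF j s ts] by simp
  also have "\<dots> \<le> payoff i j (I s, x)"
    unfolding payoff_eq_sum fst_conv snd_conv using x node_payoff_ge[OF i j s] by (intro sum_mono) auto
  finally show "eq_payoff j \<le> payoff i j (I s, x)" .
qed

lemma AE_penalties_between:
  assumes j: "j \<in> {1..n}" and s: "s \<in> {1..d}" and ts: "0 < t s j"
  shows "AE x in penalties s j. \<forall>u\<in>I s. L_of s j \<le> x u \<and> x u \<le> U_of s j"
proof -
  interpret P: product_prob_space
    "\<lambda>u. if u \<in> I s then interval_measure (\<phi>_of s j) else return borel 0" UNIV
    by (rule product_prob_space_penalty[OF assms])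
  show ?thesis
    unfolding penalties_eq
  proof (rule AE_finite_allI)
    fix u assume "u \<in> I s"
    then show "AE x in \<Pi>\<^sub>M u\<in>UNIV. if u \<in> I s then interval_measure (\<phi>_of s j) else return borel 0.
        L_of s j \<le> x u \<and> x u \<le> U_of s j"
      using penalty_chain.AE_phi_between[OF penalty_chain_\<alpha>[OF s] j \<alpha>_pos[OF j ts]]
      by (intro P.AE_component) auto
  qed simp
qed

lemma AE_strategy:
  assumes j: "j \<in> {1..n}" and P: "Measurable.pred actM P"
    and AE: "\<And>s. s \<in> {1..d} \<Longrightarrow> 0 < t s j \<Longrightarrow> AE x in penalties s j. P (I s, x)"
  shows "AE a in strategy j. P a"
  unfolding strategy_eq
proof (rule AE_measure_pmf_bind[OF offer_law_subprob[OF j] sets_distr P])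
  fix s assume "s \<in> set_pmf (set_choice j)"
  then show "AE a in offer_law s j. P a"
    using AE set_pmf_set_choice[OF j] P
    by (subst AE_distr_iff[OF measurable_Pair_I]) (auto simp: pred_def)
qed

lemma strat_payoff_eq:
  assumes i: "i < l" and j: "j \<in> {1..n}"
  shows "strat_payoff l m c v f Q (\<lambda>i. strategy) i j = eq_payoff j"
proof -
  interpret S: prob_space "strategy j" by (rule prob_space_strategy[OF j])
  have [measurable]: "(\<lambda>a. payoff i j a) \<in> borel_measurable actM"
    by (rule payoff_measurable[OF j])
  have "Measurable.pred actM (\<lambda>a. payoff i j a = eq_payoff j)" by measurable
  then have "AE a in strategy j. payoff i j a = eq_payoff j"
  proof (rule AE_strategy[OF j])
    fix s assume s: "s \<in> {1..d}" and ts: "0 < t s j"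
    show "AE x in penalties s j. payoff i j (I s, x) = eq_payoff j"
      using AE_penalties_between[OF j s ts] by eventually_elim (rule payoff_on_support[OF i j s ts])
  qed
  then have "strat_payoff l m c v f Q (\<lambda>i. strategy) i j = (\<integral>a. eq_payoff j \<partial>strategy j)"
    unfolding strat_payoff_def using sets_strategy
    by (intro integral_cong_AE) (simp_all cong: measurable_cong_sets)
  then show ?thesis by (simp add: S.prob_space)
qed

theorem nash_eq_strategy: "nash_eq E l m n c v f Q (\<lambda>i. strategy)"
  unfolding nash_eq_def
proof (intro allI impI ballI conjI)
  fix i j assume i: "i < l" and j: "j \<in> {1..n}"
  show "prob_space (strategy j)" by (rule prob_space_strategy[OF j])
  show "sets (strategy j) = sets actM" by (rule sets_strategy)
  have "Measurable.pred actM (\<lambda>a::'v action. indep_set E (fst a))"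
    unfolding actM_def by measurable
  then show "AE a in strategy j. indep_set E (fst a)"
    by (rule AE_strategy[OF j]) (simp add: indep_set_I)
  show "payoff i j a \<le> strat_payoff l m c v f Q (\<lambda>i. strategy) i j" if "indep_set E (fst a)" for a
    using payoff_le[OF i j that] strat_payoff_eq[OF i j] by simp
qed

end

lemma maximal_indep_set_nonempty:
  assumes "\<forall>u. \<not> E u u" and "maximal_indep_set E S"
  shows "S \<noteq> {}"
proof
  assume "S = {}"
  then have "indep_set E (insert u S)" for u using assms(1) by (simp add: indep_set_def)
  then show False using assms(2) \<open>S = {}\<close> by (simp add: maximal_indep_set_def)
qed

theorem theorem4:
  fixes E :: "'v::finite \<Rightarrow> 'v \<Rightarrow> bool"
    and l m n d :: nat
    and Q :: "nat pmf"
    and c v :: real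
    and g f :: "nat \<Rightarrow> real \<Rightarrow> real"
    and I :: "nat \<Rightarrow> 'v set"
    and t :: "nat \<Rightarrow> nat \<Rightarrow> real"
  assumes graph: "\<forall>u w. E u w \<longrightarrow> E w u" "\<forall>u. \<not> E u u"
    and lm: "1 \<le> m" "m < l"
    and Q_support: "set_pmf Q \<subseteq> {..n}"
    and Q_sum: "(\<Sum>j=1..n. pmf Q j) < 1"
    and Q_pos: "\<forall>j\<in>{1..n}. pmf Q j > 0"
    and g_cont: "\<forall>j\<in>{1..n}. continuous_on UNIV (g j)"
    and g_mono: "\<forall>j\<in>{1..n}. strict_mono (g j)"
    and g_surj: "\<forall>j\<in>{1..n}. surj (g j)"
    and f_inv: "\<forall>j\<in>{1..n}. f j = inv (g j)"
    and g_order: "\<forall>i\<in>{1..n}. \<forall>j\<in>{1..n}. \<forall>p. j < i \<longrightarrow> g i p < g j p"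
    and ratio: "\<forall>i\<in>{1..n}. \<forall>j\<in>{1..n}. \<forall>x y. i < j \<and> g i c < y \<and> y < x \<longrightarrow>
                  (f i y - c) / (f j y - c) < (f i x - c) / (f j x - c)"
    and f1v: "f 1 v > c"
    and G: "mean_valid E d I"
    and t_family: "\<forall>j\<in>{1..n}.
        (\<forall>s\<in>{1..d}. t s j \<ge> 0) \<and> (\<Sum>s=1..d. t s j) = 1 \<and>
        (\<exists>dj\<in>{1..d}.
           (\<forall>s\<in>{1..d}. s \<le> dj \<longrightarrow> t s j > 0) \<and>
           (\<forall>s\<in>{1..d}. dj < s \<longrightarrow> t s j = 0) \<and>
           (\<forall>s\<in>{1..dj}. real (card (I s)) * Wfun l m (\<Sum>k=j..n. t s k * pmf Q k)
                        = real (card (I 1)) * Wfun l m (\<Sum>k=j..n. t 1 k * pmf Q k)) \<and>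
           (\<forall>s. dj \<le> s \<and> s < d \<longrightarrow>
                real (card (I (Suc s))) * Wfun l m (\<Sum>k=j..n. t (Suc s) k * pmf Q k)
                \<le> real (card (I s)) * Wfun l m (\<Sum>k=j..n. t s k * pmf Q k)))"
  shows "nash_eq E l m n c v f Q (\<lambda>i. eq_strategy l m c v f g n Q d I t)"
proof -
  have "I s \<noteq> {}" if "s \<in> {1..d}" for s
    using maximal_indep_set_nonempty[of E, OF graph(2)] G that by (simp add: mean_valid_def)
  then interpret spectrum_equilibrium l m c v f g n d I Q t E
    using lm g_cont g_mono g_surj f_inv g_order ratio f1v Q_pos Q_sum t_family G Q_support
    by unfold_locales (auto simp: mean_valid_def card_gt_0_iff)
  show ?thesis by (rule nash_eq_strategy)
qed

end
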